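(* Let $k,l\in\mathbb{Z}$ with $k\ne l$, and let $i_1,\dots,i_m,j_1,\dots,j_n\in\{1,\dots,r\}$ (with $m,n\ge0$). Then every $R$-bimodule homomorphism (of any degree) $$B_\rho^{\otimes k}\otimes_R B_{i_1}\otimes_R\cdots\otimes_R B_{i_m}\longrightarrow B_\rho^{\otimes l}\otimes_R B_{j_1}\otimes_R\cdots\otimes_R B_{j_n}$$ is zero.
   Context: Fix $r\ge 3$. Let $R=\mathbb{Q}[y,x_1,\dots,x_r]$, graded by $\deg y=\deg x_i=2$. Let $\rho,\sigma_1,\dots,\sigma_r$ be the graded $\mathbb{Q}[y]$-algebra automorphisms of $R$ (all fixing $y$) given by: $\rho(x_i)=x_{i+1}$ for $1\le i\le r-1$ and $\rho(x_r)=x_1-y$ (so $\rho^{-1}(x_1)=x_r+y$ and $\rho^{-1}(x_i)=x_{i-1}$ for $i\ge 2$); for $1\le j\le r-1$, $\sigma_j$ swaps $x_j$ and $x_{j+1}$ and fixes the other $x_i$; $\sigma_r(x_1)=x_r+y$, $\sigma_r(x_r)=x_1-y$, $\sigma_r(x_i)=x_i$ for $2\le i\le r-1$. Let $R^{\sigma_i}\subset R$ be the subring of $\sigma_i$-invariants and $B_i=R\otimes_{R^{\sigma_i}}R$, a graded $R$-bimodule. Indices of $\sigma_i$ and $B_i$ are read modulo $r$ (e.g. $B_{r+1}=B_1$). For $\tau\in\{\rho,\rho^{-1}\}$, $B_\tau$ denotes the graded $R$-bimodule which equals $R$ as a left $R$-module, with right action $m\cdot a=m\,\tau(a)$. For $k\in\mathbb{Z}$,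 $B_\rho^{\otimes k}$ is the tensor product over $R$ of $|k|$ copies of $B_\rho$ if $k\ge 0$, of $B_{\rho^{-1}}$ if $k<0$ (and $B_\rho^{\otimes 0}=R$). Grading shift: for a graded module $M$, $M\{p\}_i=M_{i-p}$. *)

theory Defs
  imports Complex_Main "HOL-Library.Poly_Mapping"
begin

text \<open>Polynomials with rational coefficients in variables indexed by nat.
  Variable 0 is y, variable i (1 \<le> i \<le> r) is x_i.  The ring R is the
  subset of polynomials only involving variables 0..r.\<close>

type_synonym poly = "(nat \<Rightarrow>\<^sub>0 nat) \<Rightarrow>\<^sub>0 rat"

definition Var :: "nat \<Rightarrow> poly" where
  "Var v = Poly_Mapping.single (Poly_Mapping.single v 1) 1"

definition Const :: "rat \<Rightarrow> poly" where
  "Const q = Poly_Mapping.single 0 q"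

definition Rset :: "nat \<Rightarrow> poly set" where
  "Rset r = {p. \<forall>m\<in>Poly_Mapping.keys p. \<forall>v\<in>Poly_Mapping.keys m. v \<le> r}"

definition hom_poly :: "poly \<Rightarrow> nat \<Rightarrow> bool" where
  "hom_poly p d \<longleftrightarrow>
     (\<forall>m\<in>Poly_Mapping.keys p. 2 * (\<Sum>v\<in>Poly_Mapping.keys m. Poly_Mapping.lookup m v) = d)"

definition subst :: "(nat \<Rightarrow> poly) \<Rightarrow> poly \<Rightarrow> poly" where
  "subst s p = (\<Sum>m\<in>Poly_Mapping.keys p.
      Const (Poly_Mapping.lookup p m) *
      (\<Prod>v\<in>Poly_Mapping.keys m. s v ^ Poly_Mapping.lookup m v))"

definition rho :: "nat \<Rightarrow> poly \<Rightarrow> poly" where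
  "rho r = subst (\<lambda>v. if v = r then Var 1 - Var 0
                      else if 1 \<le> v \<and> v < r then Var (Suc v) else Var v)"

definition rho_inv :: "nat \<Rightarrow> poly \<Rightarrow> poly" where
  "rho_inv r = subst (\<lambda>v. if v = 1 then Var r + Var 0
                          else if 2 \<le> v \<and> v \<le> r then Var (v - 1) else Var v)"

definition sigma :: "nat \<Rightarrow> nat \<Rightarrow> poly \<Rightarrow> poly" where
  "sigma r j = (if j < r then
       subst (\<lambda>v. if v = j then Var (Suc j) else if v = Suc j then Var j else Var v)
     else
       subst (\<lambda>v. if v = 1 then Var r + Var 0 else if v = r then Var 1 - Var 0 else Var v))"

definition Inv :: "nat \<Rightarrow> nat \<Rightarrow> poly set" where
  "Inv r j = {p \<in> Rset r. sigma r j p = p}"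

text \<open>A tensor product M_1 \<otimes>_R ... \<otimes>_R M_s of the factors R, B_tau = R (right action
  twisted by tau), B_i = R \<otimes>_{R^{sigma_i}} R is realised (flattened) as a quotient of
  the free Q-vector space on lists of elements of R ("slots").  Each slot carries
  a pair (phi, S): phi is the twist of the right action of R on that slot's
  factor, and S is the ring over which this slot is tensored with the next slot.\<close>

datatype factor = Rf | Tw "poly \<Rightarrow> poly" | Bs nat

fun fslots :: "nat \<Rightarrow> factor \<Rightarrow> ((poly \<Rightarrow> poly) \<times> poly set) list" where
  "fslots r Rf = [(id, Rset r)]"
| "fslots r (Tw tau) = [(tau, Rset r)]"
| "fslots r (Bs i) = [(id, Inv r i), (id, Rset r)]"

definition slots :: "nat \<Rightarrow> factor list \<Rightarrow> ((poly \<Rightarrow> poly) \<times> poly set) list" where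
  "slots r fs = concat (map (fslots r) fs)"

definition bpow :: "nat \<Rightarrow> int \<Rightarrow> factor list" where
  "bpow r k = (if k = 0 then [Rf]
               else if k > 0 then replicate (nat k) (Tw (rho r))
               else replicate (nat (- k)) (Tw (rho_inv r)))"

definition bfactors :: "nat \<Rightarrow> int \<Rightarrow> nat list \<Rightarrow> factor list" where
  "bfactors r k is' = bpow r k @ map Bs is'"

type_synonym fv = "poly list \<Rightarrow>\<^sub>0 rat"

definition dl :: "poly list \<Rightarrow> fv" where
  "dl xs = Poly_Mapping.single xs 1"

definition scal :: "rat \<Rightarrow> fv \<Rightarrow> fv" where
  "scal q u = (\<Sum>xs\<in>Poly_Mapping.keys u. Poly_Mapping.single xs (q * Poly_Mapping.lookup u xs))"

definition linext :: "(poly list \<Rightarrow> poly list) \<Rightarrow> fv \<Rightarrow> fv" where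
  "linext g u = (\<Sum>xs\<in>Poly_Mapping.keys u. Poly_Mapping.single (g xs) (Poly_Mapping.lookup u xs))"

definition lists_R :: "nat \<Rightarrow> nat \<Rightarrow> poly list set" where
  "lists_R r t = {xs. length xs = t \<and> set xs \<subseteq> Rset r}"

definition Vfree :: "nat \<Rightarrow> nat \<Rightarrow> fv set" where
  "Vfree r t = {u. Poly_Mapping.keys u \<subseteq> lists_R r t}"

text \<open>Generators of the relations: additivity and Q-homogeneity in each slot,
  and balancing between consecutive slots.\<close>
definition tgens :: "nat \<Rightarrow> ((poly \<Rightarrow> poly) \<times> poly set) list \<Rightarrow> fv set" where
  "tgens r sl =
     {dl (xs[j := a + b]) - dl (xs[j := a]) - dl (xs[j := b]) | xs j a b.
        xs \<in> lists_R r (length sl) \<and> j < length sl \<and> a \<in> Rset r \<and> b \<in> Rset r}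
   \<union> {dl (xs[j := Const q * xs ! j]) - Poly_Mapping.single xs q | xs j q.
        xs \<in> lists_R r (length sl) \<and> j < length sl}
   \<union> {dl (xs[j := xs ! j * fst (sl ! j) c]) - dl (xs[Suc j := c * xs ! Suc j]) | xs j c.
        xs \<in> lists_R r (length sl) \<and> Suc j < length sl \<and> c \<in> snd (sl ! j)}"

inductive_set trel :: "nat \<Rightarrow> ((poly \<Rightarrow> poly) \<times> poly set) list \<Rightarrow> fv set"
  for r sl where
  gen: "g \<in> tgens r sl \<Longrightarrow> g \<in> trel r sl"
| zero: "0 \<in> trel r sl"
| add: "u \<in> trel r sl \<Longrightarrow> v \<in> trel r sl \<Longrightarrow> u + v \<in> trel r sl"
| smul: "u \<in> trel r sl \<Longrightarrow> scal q u \<in> trel r sl"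

text \<open>Equivalence class (element of the tensor product) of a representative.\<close>
definition cls :: "nat \<Rightarrow> ((poly \<Rightarrow> poly) \<times> poly set) list \<Rightarrow> fv \<Rightarrow> fv set" where
  "cls r sl u = {v \<in> Vfree r (length sl). v - u \<in> trel r sl}"

definition tcarrier :: "nat \<Rightarrow> ((poly \<Rightarrow> poly) \<times> poly set) list \<Rightarrow> fv set set" where
  "tcarrier r sl = cls r sl ` Vfree r (length sl)"

definition tzero :: "nat \<Rightarrow> ((poly \<Rightarrow> poly) \<times> poly set) list \<Rightarrow> fv set" where
  "tzero r sl = cls r sl 0"

definition tadd :: "fv set \<Rightarrow> fv set \<Rightarrow> fv set" where
  "tadd A B = {a + b | a b. a \<in> A \<and> b \<in> B}"

definition tlact :: "nat \<Rightarrow> ((poly \<Rightarrow> poly) \<times> poly set) list \<Rightarrow> poly \<Rightarrow> fv set \<Rightarrow> fv set" where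
  "tlact r sl c A = (\<Union>a\<in>A. cls r sl (linext (\<lambda>xs. xs[0 := c * xs ! 0]) a))"

definition tract :: "nat \<Rightarrow> ((poly \<Rightarrow> poly) \<times> poly set) list \<Rightarrow> poly \<Rightarrow> fv set \<Rightarrow> fv set" where
  "tract r sl c A = (\<Union>a\<in>A. cls r sl
      (linext (\<lambda>xs. xs[length sl - 1 := xs ! (length sl - 1) * fst (last sl) c]) a))"

definition hom_list :: "poly list \<Rightarrow> int \<Rightarrow> bool" where
  "hom_list xs p \<longleftrightarrow> (\<exists>ds. length ds = length xs \<and>
      (\<forall>i<length xs. hom_poly (xs ! i) (ds ! i)) \<and> int (sum_list ds) = p)"

definition thom :: "fv set \<Rightarrow> int \<Rightarrow> bool" where
  "thom A p \<longleftrightarrow> (\<exists>u\<in>A. \<forall>xs\<in>Poly_Mapping.keys u. hom_list xs p)"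

definition bihom :: "nat \<Rightarrow> ((poly \<Rightarrow> poly) \<times> poly set) list \<Rightarrow>
    ((poly \<Rightarrow> poly) \<times> poly set) list \<Rightarrow> int \<Rightarrow> (fv set \<Rightarrow> fv set) \<Rightarrow> bool" where
  "bihom r X Y d f \<longleftrightarrow>
     (\<forall>A\<in>tcarrier r X. f A \<in> tcarrier r Y) \<and>
     (\<forall>A\<in>tcarrier r X. \<forall>B\<in>tcarrier r X. f (tadd A B) = tadd (f A) (f B)) \<and>
     (\<forall>c\<in>Rset r. \<forall>A\<in>tcarrier r X. f (tlact r X c A) = tlact r Y c (f A)) \<and>
     (\<forall>c\<in>Rset r. \<forall>A\<in>tcarrier r X. f (tract r X c A) = tract r Y c (f A)) \<and>
     (\<forall>A\<in>tcarrier r X. \<forall>p. thom A p \<longrightarrow> thom (f A) (p + d))"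

end

theory Submission
  imports Defs
begin

text \<open>The element \<open>p\<^sub>c = x\<^sub>1 + \<dots> + x\<^sub>r + c y\<close> is fixed by every \<open>\<sigma>\<^sub>i\<close>, while
  \<open>\<rho>(p\<^sub>c) = p\<^sub>c\<^sub>-\<^sub>1\<close>. Moving it through the factors of
  \<open>B\<^sub>\<rho>\<^sup>\<otimes>\<^sup>k \<otimes> B\<^sub>i\<^sub>\<^sub>1 \<otimes> \<dots> \<otimes> B\<^sub>i\<^sub>\<^sub>m\<close> from right to left
  turns right multiplication by \<open>p\<^sub>0\<close> into left multiplication by \<open>p\<^sub>-\<^sub>k\<close>. A bimodule map \<open>f\<close>
  commutes with both actions, so \<open>p\<^sub>-\<^sub>l f(A) = f(A) p\<^sub>0 = p\<^sub>-\<^sub>k f(A)\<close>, i.e.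
  \<open>(k - l) y f(A) = 0\<close>. Since \<open>R\<close> is free over \<open>R\<^sup>\<sigma>\<^sup>\<^sub>i\<close> on \<open>1\<close> and \<open>\<alpha>\<^sub>i\<close>, the target is a free,
  hence torsion-free, left \<open>R\<close>-module, and \<open>f(A) = 0\<close>.\<close>

lemma poly_mapping_sum_single:
  fixes u :: "'a \<Rightarrow>\<^sub>0 'b::comm_monoid_add"
  shows "u = (\<Sum>k\<in>Poly_Mapping.keys u. Poly_Mapping.single k (Poly_Mapping.lookup u k))"
proof -
  have *: "finite I \<Longrightarrow> Poly_Mapping.lookup (\<Sum>k\<in>I. Poly_Mapping.single k (Poly_Mapping.lookup u k)) j =
            (if j \<in> I then Poly_Mapping.lookup u j else 0)" for I j
    by (induction I rule: finite_induct) (auto simp: lookup_single lookup_add when_def)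
  show ?thesis
    by (rule poly_mapping_eqI) (fastforce simp add: in_keys_iff *)
qed

lemma Const_add: "Const (a + b) = Const a + Const b" by (simp add: Const_def single_add)
lemma Const_mult: "Const (a * b) = Const a * Const b" by (simp add: Const_def mult_single)
lemma Const_diff: "Const (a - b) = Const a - Const b" by (simp add: Const_def single_diff)
lemma Const_0 [simp]: "Const 0 = 0" by (simp add: Const_def)
lemma Const_1 [simp]: "Const 1 = 1" by (simp add: Const_def)
lemma Const_eq_0_iff [simp]: "Const a = 0 \<longleftrightarrow> a = 0" by (metis Const_def single_zero lookup_single_eq)

lemma Var_ne_0: "Var v \<noteq> 0"
  by (metis Var_def lookup_single_eq lookup_zero one_neq_zero)

lemma lookup_Var: "Poly_Mapping.lookup (Var v) m = (if m = Poly_Mapping.single v 1 then 1 else 0)"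
  by (simp add: Var_def lookup_single when_def)

lemma single_Suc_0_eq_iff [simp]:
  "Poly_Mapping.single v (Suc 0) = Poly_Mapping.single w (Suc 0) \<longleftrightarrow> v = w"
  by (metis lookup_single_eq lookup_single_not_eq one_neq_zero One_nat_def)

lemma Var_power: "Var v ^ n = Poly_Mapping.single (Poly_Mapping.single v n) (1::rat)"
  by (induction n) (simp_all add: Var_def mult_single single_add[symmetric] add.commute)

definition monom_subst :: "(nat \<Rightarrow> poly) \<Rightarrow> (nat \<Rightarrow>\<^sub>0 nat) \<Rightarrow> poly" where
  "monom_subst s m = (\<Prod>v\<in>Poly_Mapping.keys m. s v ^ Poly_Mapping.lookup m v)"

lemma monom_subst_superset:
  assumes "finite K" "Poly_Mapping.keys m \<subseteq> K"
  shows "monom_subst s m = (\<Prod>v\<in>K. s v ^ Poly_Mapping.lookup m v)"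
  unfolding monom_subst_def using assms
  by (intro prod.mono_neutral_cong_left) (auto simp: in_keys_iff)

lemma monom_subst_0 [simp]: "monom_subst s 0 = 1"
  by (simp add: monom_subst_def)

lemma monom_subst_add: "monom_subst s (a + b) = monom_subst s a * monom_subst s b"
proof -
  let ?K = "Poly_Mapping.keys a \<union> Poly_Mapping.keys b"
  have "monom_subst s (a + b) = (\<Prod>v\<in>?K. s v ^ Poly_Mapping.lookup (a + b) v)"
    by (rule monom_subst_superset) (auto simp: keys_add)
  also have "\<dots> = (\<Prod>v\<in>?K. s v ^ Poly_Mapping.lookup a v * s v ^ Poly_Mapping.lookup b v)"
    by (simp add: lookup_add power_add)
  also have "\<dots> = monom_subst s a * monom_subst s b"
    by (simp add: prod.distrib monom_subst_superset[of ?K])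
  finally show ?thesis .
qed

lemma single_eq_Const_mult_monom_subst: "Poly_Mapping.single m c = Const c * monom_subst Var m"
proof -
  have single_sum: "finite V \<Longrightarrow>
      Poly_Mapping.single (\<Sum>v\<in>V. f v) (1::rat) = (\<Prod>v\<in>V. Poly_Mapping.single (f v) 1)"
    for V :: "nat set" and f :: "nat \<Rightarrow> nat \<Rightarrow>\<^sub>0 nat"
  proof (induction V rule: finite_induct)
    case (insert x F)
    have "Poly_Mapping.single (f x + sum f F) (1::rat) =
        Poly_Mapping.single (f x) 1 * Poly_Mapping.single (sum f F) 1"
      by (simp add: mult_single)
    with insert show ?case by simp
  qed simp
  have "Poly_Mapping.single m (1::rat) =
      Poly_Mapping.single (\<Sum>v\<in>Poly_Mapping.keys m. Poly_Mapping.single v (Poly_Mapping.lookup m v)) 1"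
    using poly_mapping_sum_single[of m] by simp
  also have "\<dots> = monom_subst Var m"
    by (simp add: single_sum monom_subst_def Var_power)
  finally have "monom_subst Var m = Poly_Mapping.single m 1" ..
  then show ?thesis
    by (simp add: Const_def mult_single)
qed

lemma subst_superset:
  assumes "finite K" "Poly_Mapping.keys p \<subseteq> K"
  shows "subst s p = (\<Sum>m\<in>K. Const (Poly_Mapping.lookup p m) * monom_subst s m)"
  unfolding subst_def monom_subst_def[symmetric] using assms
  by (intro sum.mono_neutral_cong_left) (auto simp: in_keys_iff)

lemma subst_add: "subst s (p + q) = subst s p + subst s q"
proof -
  let ?K = "Poly_Mapping.keys p \<union> Poly_Mapping.keys q"
  have "subst s (p + q) = (\<Sum>m\<in>?K. Const (Poly_Mapping.lookup (p + q) m) * monom_subst s m)"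
    by (rule subst_superset) (auto simp: keys_add)
  also have "\<dots> = (\<Sum>m\<in>?K. Const (Poly_Mapping.lookup p m) * monom_subst s m
                       + Const (Poly_Mapping.lookup q m) * monom_subst s m)"
    by (simp add: lookup_add Const_add distrib_right)
  also have "\<dots> = subst s p + subst s q"
    by (simp add: sum.distrib subst_superset[of ?K])
  finally show ?thesis .
qed

lemma subst_diff: "subst s (p - q) = subst s p - subst s q"
  by (metis diff_add_cancel subst_add add_diff_cancel_right')

lemma subst_0 [simp]: "subst s 0 = 0"
  by (simp add: subst_def)

lemma subst_single: "subst s (Poly_Mapping.single m c) = Const c * monom_subst s m"
  by (cases "c = 0") (simp_all add: subst_def monom_subst_def)

lemma subst_sum: "subst s (\<Sum>i\<in>I. f i) = (\<Sum>i\<in>I. subst s (f i))"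
  by (induction I rule: infinite_finite_induct) (auto simp: subst_add)

lemma subst_mult: "subst s (p * q) = subst s p * subst s q"
proof -
  have "p * q = (\<Sum>m\<in>Poly_Mapping.keys p. \<Sum>n\<in>Poly_Mapping.keys q.
          Poly_Mapping.single (m + n) (Poly_Mapping.lookup p m * Poly_Mapping.lookup q n))"
    by (subst (1 2) poly_mapping_sum_single) (simp add: sum_product mult_single)
  then have "subst s (p * q) = (\<Sum>m\<in>Poly_Mapping.keys p. \<Sum>n\<in>Poly_Mapping.keys q.
          (Const (Poly_Mapping.lookup p m) * monom_subst s m) *
          (Const (Poly_Mapping.lookup q n) * monom_subst s n))"
    by (simp add: subst_sum subst_single monom_subst_add Const_mult mult_ac)
  also have "\<dots> = subst s p * subst s q"
    by (simp add: subst_def monom_subst_def sum_product)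
  finally show ?thesis .
qed

lemma subst_Const [simp]: "subst s (Const q) = Const q"
  by (simp add: Const_def subst_single)

lemma subst_Var [simp]: "subst s (Var v) = s v"
  by (simp add: Var_def subst_single monom_subst_def)

lemma subst_Var_id: "subst Var p = p"
proof -
  have "p = (\<Sum>m\<in>Poly_Mapping.keys p. Poly_Mapping.single m (Poly_Mapping.lookup p m))"
    by (rule poly_mapping_sum_single)
  also have "\<dots> = (\<Sum>m\<in>Poly_Mapping.keys p. Const (Poly_Mapping.lookup p m) * monom_subst Var m)"
    by (simp add: single_eq_Const_mult_monom_subst)
  finally show ?thesis by (simp add: subst_def monom_subst_def)
qed

lemma Rset_iff: "p \<in> Rset r \<longleftrightarrow> (\<forall>m\<in>Poly_Mapping.keys p. \<forall>v\<in>Poly_Mapping.keys m. v \<le> r)"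
  by (simp add: Rset_def)

lemma Rset_add [intro]: "p \<in> Rset r \<Longrightarrow> q \<in> Rset r \<Longrightarrow> p + q \<in> Rset r"
  unfolding Rset_iff using keys_add[of p q] by blast

lemma Rset_uminus [intro]: "p \<in> Rset r \<Longrightarrow> - p \<in> Rset r"
  unfolding Rset_iff by simp

lemma Rset_diff [intro]: "p \<in> Rset r \<Longrightarrow> q \<in> Rset r \<Longrightarrow> p - q \<in> Rset r"
  by (metis Rset_add Rset_uminus diff_conv_add_uminus)

lemma Rset_mult [intro]:
  assumes "p \<in> Rset r" "q \<in> Rset r"
  shows "p * q \<in> Rset r"
  unfolding Rset_iff
proof (intro ballI)
  fix m v assume m: "m \<in> Poly_Mapping.keys (p * q)" and v: "v \<in> Poly_Mapping.keys m"
  from m keys_mult[of p q] obtain a b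
    where "m = a + b" "a \<in> Poly_Mapping.keys p" "b \<in> Poly_Mapping.keys q"
    by blast
  with v keys_add[of a b] assms show "v \<le> r"
    unfolding Rset_iff by blast
qed

lemma Rset_Const [intro, simp]: "Const q \<in> Rset r"
  unfolding Rset_iff Const_def by (cases "q = 0") auto

lemma Rset_0 [intro, simp]: "0 \<in> Rset r"
  using Rset_Const[of 0 r] by simp

lemma Rset_1 [intro, simp]: "1 \<in> Rset r"
  using Rset_Const[of 1 r] by simp

lemma Rset_Var [intro]: "v \<le> r \<Longrightarrow> Var v \<in> Rset r"
  unfolding Rset_iff Var_def by auto

lemma Rset_sum [intro]: "(\<And>i. i \<in> I \<Longrightarrow> f i \<in> Rset r) \<Longrightarrow> (\<Sum>i\<in>I. f i) \<in> Rset r"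
  by (induction I rule: infinite_finite_induct) auto

lemma Rset_prod [intro]: "(\<And>i. i \<in> I \<Longrightarrow> f i \<in> Rset r) \<Longrightarrow> (\<Prod>i\<in>I. f i) \<in> Rset r"
  by (induction I rule: infinite_finite_induct) auto

lemma Rset_power [intro]: "p \<in> Rset r \<Longrightarrow> p ^ n \<in> Rset r"
  by (induction n) auto

lemma Rset_subst:
  assumes "p \<in> Rset r" "\<And>v. v \<le> r \<Longrightarrow> s v \<in> Rset r"
  shows "subst s p \<in> Rset r"
  unfolding subst_def
proof (intro Rset_sum Rset_mult Rset_Const Rset_prod Rset_power)
  fix m v assume "m \<in> Poly_Mapping.keys p" "v \<in> Poly_Mapping.keys m"
  with assms(1) have "v \<le> r" unfolding Rset_iff by blast
  then show "s v \<in> Rset r" by (rule assms(2))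
qed

lemma Rset_induct [consumes 1, case_names Const Var add mult]:
  assumes p: "p \<in> Rset r"
    and Const: "\<And>q. P (Const q)" and Var: "\<And>v. v \<le> r \<Longrightarrow> P (Var v)"
    and add: "\<And>a b. a \<in> Rset r \<Longrightarrow> b \<in> Rset r \<Longrightarrow> P a \<Longrightarrow> P b \<Longrightarrow> P (a + b)"
    and mult: "\<And>a b. a \<in> Rset r \<Longrightarrow> b \<in> Rset r \<Longrightarrow> P a \<Longrightarrow> P b \<Longrightarrow> P (a * b)"
  shows "P p"
proof -
  let ?Q = "\<lambda>a. a \<in> Rset r \<and> P a"
  have const: "?Q (Const q)" for q
    using Const by simp
  have var: "v \<le> r \<Longrightarrow> ?Q (Var v)" for v
    using Var Rset_Var by simp
  have times: "?Q a \<Longrightarrow> ?Q b \<Longrightarrow> ?Q (a * b)" for a b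
    using mult by auto
  have sum: "(\<And>i. i \<in> I \<Longrightarrow> ?Q (f i)) \<Longrightarrow> ?Q (\<Sum>i\<in>I. f i)" for I and f :: "'x \<Rightarrow> poly"
    by (induction I rule: infinite_finite_induct) (use const[of 0] add in auto)
  have prod: "(\<And>i. i \<in> I \<Longrightarrow> ?Q (f i)) \<Longrightarrow> ?Q (\<Prod>i\<in>I. f i)" for I and f :: "'x \<Rightarrow> poly"
    by (induction I rule: infinite_finite_induct) (use const[of 1] times in auto)
  have power: "?Q a \<Longrightarrow> ?Q (a ^ n)" for a n
    by (induction n) (use const[of 1] times in auto)
  have "?Q (subst Var p)"
    unfolding subst_def
  proof (intro sum times const prod power var)
    fix m v assume "m \<in> Poly_Mapping.keys p" "v \<in> Poly_Mapping.keys m"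
    with p show "v \<le> r" unfolding Rset_iff by blast
  qed
  then show ?thesis by (simp add: subst_Var_id)
qed

definition ring_endo :: "nat \<Rightarrow> (poly \<Rightarrow> poly) \<Rightarrow> bool" where
  "ring_endo r \<phi> \<longleftrightarrow> (\<forall>a b. \<phi> (a + b) = \<phi> a + \<phi> b) \<and> (\<forall>a b. \<phi> (a * b) = \<phi> a * \<phi> b) \<and>
     (\<forall>q. \<phi> (Const q) = Const q) \<and> (\<forall>a\<in>Rset r. \<phi> a \<in> Rset r)"

lemma ring_endo_id: "ring_endo r id"
  by (simp add: ring_endo_def)

lemma ring_endo_comp: "ring_endo r \<phi> \<Longrightarrow> ring_endo r \<psi> \<Longrightarrow> ring_endo r (\<phi> \<circ> \<psi>)"
  by (simp add: ring_endo_def)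

lemma ring_endo_subst: "(\<And>v. v \<le> r \<Longrightarrow> s v \<in> Rset r) \<Longrightarrow> ring_endo r (subst s)"
  by (simp add: ring_endo_def subst_add subst_mult Rset_subst)

context
  fixes r \<phi> assumes endo: "ring_endo r \<phi>"
begin

lemma ring_endo_add: "\<phi> (a + b) = \<phi> a + \<phi> b"
  using endo by (simp add: ring_endo_def)

lemma ring_endo_mult: "\<phi> (a * b) = \<phi> a * \<phi> b"
  using endo by (simp add: ring_endo_def)

lemma ring_endo_Const: "\<phi> (Const q) = Const q"
  using endo by (simp add: ring_endo_def)

lemma ring_endo_Rset: "a \<in> Rset r \<Longrightarrow> \<phi> a \<in> Rset r"
  using endo by (simp add: ring_endo_def)

lemma ring_endo_diff: "\<phi> (a - b) = \<phi> a - \<phi> b"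
  by (metis add_diff_cancel_right' diff_add_cancel ring_endo_add)

end

lemma ring_endo_eqI:
  assumes "ring_endo r \<phi>" "ring_endo r \<psi>" "\<And>v. v \<le> r \<Longrightarrow> \<phi> (Var v) = \<psi> (Var v)" "p \<in> Rset r"
  shows "\<phi> p = \<psi> p"
  using assms(4)
  by (induction rule: Rset_induct)
    (simp_all add: assms(3) ring_endo_Const[OF assms(1)] ring_endo_Const[OF assms(2)]
      ring_endo_add[OF assms(1)] ring_endo_add[OF assms(2)]
      ring_endo_mult[OF assms(1)] ring_endo_mult[OF assms(2)])

section \<open>The involutions \<open>\<sigma>\<^sub>i\<close> and the decomposition \<open>R = R\<^sup>\<sigma>\<^sup>\<^sub>i \<oplus> \<alpha>\<^sub>i R\<^sup>\<sigma>\<^sup>\<^sub>i\<close>\<close>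

definition sigma_img :: "nat \<Rightarrow> nat \<Rightarrow> nat \<Rightarrow> poly" where
  "sigma_img r j = (if j < r then
       (\<lambda>v. if v = j then Var (Suc j) else if v = Suc j then Var j else Var v)
     else (\<lambda>v. if v = 1 then Var r + Var 0 else if v = r then Var 1 - Var 0 else Var v))"

lemma sigma_eq_subst: "sigma r j = subst (sigma_img r j)"
  by (simp add: sigma_def sigma_img_def)

definition alpha :: "nat \<Rightarrow> nat \<Rightarrow> poly" where
  "alpha r j = (if j < r then Var j - Var (Suc j) else Var 1 - Var r - Var 0)"

definition odd_coeff :: "nat \<Rightarrow> nat \<Rightarrow> poly \<Rightarrow> poly" where
  "odd_coeff r i c = (SOME b. b \<in> Inv r i \<and> c - b * alpha r i \<in> Inv r i)"

definition even_part :: "nat \<Rightarrow> nat \<Rightarrow> poly \<Rightarrow> poly" where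
  "even_part r i c = c - odd_coeff r i c * alpha r i"

context
  fixes r i :: nat
  assumes r3: "3 \<le> r" and i1: "1 \<le> i" and ir: "i \<le> r"
begin

lemma ring_endo_sigma: "ring_endo r (sigma r i)"
  unfolding sigma_eq_subst using r3 ir
  by (intro ring_endo_subst) (auto simp: sigma_img_def Rset_Var Rset_add Rset_diff)

lemma alpha_Rset: "alpha r i \<in> Rset r"
  using r3 ir by (auto simp: alpha_def Rset_Var Rset_diff)

lemma alpha_ne_0: "alpha r i \<noteq> 0"
proof
  let ?v = "if i < r then i else 1"
  have "Poly_Mapping.lookup (alpha r i) (Poly_Mapping.single ?v 1) = 1"
    using r3 by (simp add: alpha_def lookup_minus lookup_Var)
  then show "alpha r i = 0 \<Longrightarrow> False" by simp
qed

lemma sigma_alpha: "sigma r i (alpha r i) = - alpha r i"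
  using r3 i1 ir by (auto simp: sigma_eq_subst alpha_def sigma_img_def subst_diff)

lemma sigma_sigma: "p \<in> Rset r \<Longrightarrow> sigma r i (sigma r i p) = p"
  using ring_endo_eqI[OF ring_endo_comp[OF ring_endo_sigma ring_endo_sigma] ring_endo_id, of p]
    r3 i1 ir by (auto simp: sigma_eq_subst sigma_img_def subst_diff subst_add)

lemma alpha_dvd_sigma_diff: "p \<in> Rset r \<Longrightarrow> \<exists>b\<in>Rset r. p - sigma r i p = alpha r i * b"
proof (induction rule: Rset_induct)
  case (Const q)
  then show ?case by (intro bexI[of _ 0]) (auto simp: ring_endo_Const[OF ring_endo_sigma])
next
  case (Var v)
  show ?case
  proof (cases "i < r")
    case True
    then show ?thesis using Var i1
      by (intro bexI[of _ "if v = i then 1 else if v = Suc i then -1 else 0"])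
        (auto simp: sigma_eq_subst sigma_img_def alpha_def)
  next
    case False
    then show ?thesis using Var r3 ir
      by (intro bexI[of _ "if v = 1 then 1 else if v = r then -1 else 0"])
        (auto simp: sigma_eq_subst sigma_img_def alpha_def algebra_simps)
  qed
next
  case (add a b)
  then obtain ba bb where "ba \<in> Rset r" "bb \<in> Rset r"
    "a - sigma r i a = alpha r i * ba" "b - sigma r i b = alpha r i * bb" by blast
  then show ?case
    by (intro bexI[of _ "ba + bb"]) (auto simp: ring_endo_add[OF ring_endo_sigma] algebra_simps)
next
  case (mult a b)
  then obtain ba bb where b: "ba \<in> Rset r" "bb \<in> Rset r"
    "a - sigma r i a = alpha r i * ba" "b - sigma r i b = alpha r i * bb" by blast
  have "a * b - sigma r i (a * b) = (a - sigma r i a) * b + sigma r i a * (b - sigma r i b)"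
    by (simp add: ring_endo_mult[OF ring_endo_sigma] algebra_simps)
  also have "\<dots> = alpha r i * (ba * b + sigma r i a * bb)"
    by (simp add: b algebra_simps)
  finally show ?case
    using b mult.hyps by (intro bexI[of _ "ba * b + sigma r i a * bb"])
      (auto intro!: ring_endo_Rset[OF ring_endo_sigma])
qed

lemma Inv_add: "a \<in> Inv r i \<Longrightarrow> b \<in> Inv r i \<Longrightarrow> a + b \<in> Inv r i"
  by (simp add: Inv_def ring_endo_add[OF ring_endo_sigma] Rset_add)

lemma Inv_mult: "a \<in> Inv r i \<Longrightarrow> b \<in> Inv r i \<Longrightarrow> a * b \<in> Inv r i"
  by (simp add: Inv_def ring_endo_mult[OF ring_endo_sigma] Rset_mult)

lemma Inv_Const: "Const q \<in> Inv r i"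
  by (simp add: Inv_def ring_endo_Const[OF ring_endo_sigma])

lemma sigma_mult_alpha: "b \<in> Inv r i \<Longrightarrow> sigma r i (b * alpha r i) = - (b * alpha r i)"
  by (simp add: Inv_def ring_endo_mult[OF ring_endo_sigma] sigma_alpha)

lemma sigma_decomp_exists:
  assumes c: "c \<in> Rset r"
  shows "\<exists>b. b \<in> Inv r i \<and> c - b * alpha r i \<in> Inv r i"
proof -
  note endo = ring_endo_sigma
  obtain b0 where b0: "b0 \<in> Rset r" "c - sigma r i c = alpha r i * b0"
    using alpha_dvd_sigma_diff[OF c] by blast
  have "- (alpha r i * sigma r i b0) = sigma r i (c - sigma r i c)"
    by (simp add: b0(2) ring_endo_mult[OF endo] sigma_alpha)
  also have "\<dots> = sigma r i c - c"
    using sigma_sigma[OF c] by (simp add: ring_endo_diff[OF endo])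
  also have "\<dots> = - (alpha r i * b0)"
    by (metis b0(2) minus_diff_eq)
  finally have "b0 \<in> Inv r i"
    using alpha_ne_0 b0(1) by (simp add: Inv_def)
  then have b: "Const (1/2) * b0 \<in> Inv r i"
    by (intro Inv_mult Inv_Const)
  have "sigma r i (c - Const (1/2) * b0 * alpha r i) = sigma r i c + Const (1/2) * b0 * alpha r i"
    using sigma_mult_alpha[OF b] by (simp add: ring_endo_diff[OF endo])
  also have "\<dots> = c - Const (1/2) * b0 * alpha r i"
  proof -
    let ?h = "Const (1/2) * b0 * alpha r i"
    have "Const (1/2) + Const (1/2) = 1"
      by (simp flip: Const_add)
    then have h: "?h + ?h = alpha r i * b0"
      by (metis distrib_right mult_1 mult.commute)
    have "sigma r i c = c - alpha r i * b0"
      using b0(2) by (simp add: algebra_simps)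
    then show ?thesis
      unfolding h[symmetric] by (simp add: algebra_simps)
  qed
  finally show ?thesis
    using b c alpha_Rset by (intro exI[of _ "Const (1/2) * b0"]) (auto simp: Inv_def)
qed


lemma sigma_decomp:
  assumes "c \<in> Rset r"
  shows "even_part r i c \<in> Inv r i" "odd_coeff r i c \<in> Inv r i"
    "c = even_part r i c + odd_coeff r i c * alpha r i"
  using someI_ex[OF sigma_decomp_exists[OF assms]]
  by (simp_all add: even_part_def odd_coeff_def[symmetric])

lemma sigma_decomp_unique:
  assumes "a \<in> Inv r i" "b \<in> Inv r i" "a' \<in> Inv r i" "b' \<in> Inv r i"
    and eq: "a + b * alpha r i = a' + b' * alpha r i"
  shows "a = a'" "b = b'"
proof -
  note endo = ring_endo_sigma
  have "sigma r i (a + b * alpha r i) = sigma r i (a' + b' * alpha r i)"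
    using eq by simp
  then have "a - b * alpha r i = a' - b' * alpha r i"
    using assms(1-4) sigma_mult_alpha[of b] sigma_mult_alpha[of b']
    by (simp add: ring_endo_add[OF endo] Inv_def)
  with eq have "(a + b * alpha r i) + (a - b * alpha r i) = (a' + b' * alpha r i) + (a' - b' * alpha r i)"
    by simp
  then have "2 * a = 2 * a'"
    by (simp add: algebra_simps mult_2)
  then show "a = a'" by simp
  with eq have "b * alpha r i = b' * alpha r i" by simp
  then show "b = b'" using alpha_ne_0 by simp
qed

lemma sigma_decomp_add:
  assumes "c \<in> Rset r" "d \<in> Rset r"
  shows "even_part r i (c + d) = even_part r i c + even_part r i d"
    "odd_coeff r i (c + d) = odd_coeff r i c + odd_coeff r i d"
proof -
  have cd: "c + d \<in> Rset r" using assms by (rule Rset_add)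
  have "even_part r i (c + d) + odd_coeff r i (c + d) * alpha r i =
        (even_part r i c + even_part r i d) + (odd_coeff r i c + odd_coeff r i d) * alpha r i"
    using sigma_decomp(3)[OF assms(1)] sigma_decomp(3)[OF assms(2)] sigma_decomp(3)[OF cd]
    by (simp add: algebra_simps)
  moreover have "even_part r i c + even_part r i d \<in> Inv r i"
    "odd_coeff r i c + odd_coeff r i d \<in> Inv r i"
    using sigma_decomp[OF assms(1)] sigma_decomp[OF assms(2)] by (simp_all add: Inv_add)
  ultimately show "even_part r i (c + d) = even_part r i c + even_part r i d"
    "odd_coeff r i (c + d) = odd_coeff r i c + odd_coeff r i d"
    using sigma_decomp_unique[OF sigma_decomp(1,2)[OF cd]] by blast+
qed

lemma sigma_decomp_mult:
  assumes "z \<in> Inv r i" "c \<in> Rset r"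
  shows "even_part r i (z * c) = z * even_part r i c" "odd_coeff r i (z * c) = z * odd_coeff r i c"
proof -
  have zc: "z * c \<in> Rset r" using assms by (intro Rset_mult) (auto simp: Inv_def)
  have "even_part r i (z * c) + odd_coeff r i (z * c) * alpha r i =
        z * even_part r i c + z * odd_coeff r i c * alpha r i"
    using sigma_decomp(3)[OF assms(2)] sigma_decomp(3)[OF zc] by (metis distrib_left mult.assoc)
  moreover have "z * even_part r i c \<in> Inv r i" "z * odd_coeff r i c \<in> Inv r i"
    using assms(1) sigma_decomp[OF assms(2)] by (simp_all add: Inv_mult)
  ultimately show "even_part r i (z * c) = z * even_part r i c" "odd_coeff r i (z * c) = z * odd_coeff r i c"
    using sigma_decomp_unique[OF sigma_decomp(1,2)[OF zc]] by blast+
qed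

end

section \<open>The element \<open>p\<^sub>c = x\<^sub>1 + \<dots> + x\<^sub>r + c y\<close>\<close>

definition pc :: "nat \<Rightarrow> rat \<Rightarrow> poly" where
  "pc r c = (\<Sum>v=1..r. Var v) + Const c * Var 0"

lemma pc_Rset: "pc r c \<in> Rset r"
  unfolding pc_def by (intro Rset_add Rset_mult Rset_sum Rset_Const Rset_Var) auto

lemma pc_diff_pc: "pc r a - pc r b = Const (a - b) * Var 0"
  by (simp add: pc_def Const_diff algebra_simps)

lemma sum_first_last:
  fixes g :: "nat \<Rightarrow> 'a::comm_monoid_add"
  assumes "1 < r"
  shows "(\<Sum>v=1..r. g v) = g 1 + (\<Sum>v=2..<r. g v) + g r"
proof -
  have "{1..r} = insert 1 (insert r {2..<r})" using assms by auto
  then show ?thesis using assms by (simp add: add_ac)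
qed

lemma sigma_pc:
  assumes r3: "3 \<le> r" and i1: "1 \<le> i" and ir: "i \<le> r"
  shows "sigma r i (pc r c) = pc r c"
proof -
  have "(\<Sum>v=1..r. sigma_img r i v) = (\<Sum>v=1..r. Var v)"
  proof (cases "i < r")
    case True
    define \<tau> where "\<tau> v = (if v = i then Suc i else if v = Suc i then i else v)" for v
    have "(\<Sum>v=1..r. sigma_img r i v) = (\<Sum>v=1..r. Var (\<tau> v))"
      using True by (intro sum.cong) (auto simp: sigma_img_def \<tau>_def)
    also have "\<dots> = (\<Sum>v=1..r. Var v)"
      by (rule sum.reindex_bij_witness[where i=\<tau> and j=\<tau>]) (use True i1 in \<open>auto simp: \<tau>_def\<close>)
    finally show ?thesis .
  next
    case False
    then have "i = r" using ir by simp
    have "(\<Sum>v=1..r. sigma_img r r v) = sigma_img r r 1 + (\<Sum>v=2..<r. sigma_img r r v) + sigma_img r r r"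
      using r3 by (intro sum_first_last) simp
    also have "\<dots> = Var 1 + (\<Sum>v=2..<r. Var v) + Var r"
      using r3 by (simp add: sigma_img_def)
    also have "\<dots> = (\<Sum>v=1..r. Var v)"
      using r3 by (intro sum_first_last[symmetric]) simp
    finally show ?thesis
      using \<open>i = r\<close> by simp
  qed
  moreover have "sigma_img r i 0 = Var 0"
    using i1 r3 by (simp add: sigma_img_def)
  ultimately show ?thesis
    by (simp add: sigma_eq_subst pc_def subst_add subst_mult subst_sum)
qed

lemma pc_Inv: "3 \<le> r \<Longrightarrow> 1 \<le> i \<Longrightarrow> i \<le> r \<Longrightarrow> pc r c \<in> Inv r i"
  by (simp add: Inv_def pc_Rset sigma_pc)

lemma ring_endo_rho: "3 \<le> r \<Longrightarrow> ring_endo r (rho r)"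
  unfolding rho_def by (intro ring_endo_subst) auto

lemma ring_endo_rho_inv: "3 \<le> r \<Longrightarrow> ring_endo r (rho_inv r)"
  unfolding rho_inv_def by (intro ring_endo_subst) auto

lemma rho_inv_rho: "3 \<le> r \<Longrightarrow> p \<in> Rset r \<Longrightarrow> rho_inv r (rho r p) = p"
  using ring_endo_eqI[OF ring_endo_comp[OF ring_endo_rho_inv ring_endo_rho] ring_endo_id, of r p]
  by (auto simp: rho_def rho_inv_def subst_diff)

lemma rho_pc:
  assumes "3 \<le> r"
  shows "rho r (pc r c) = pc r (c - 1)"
proof -
  have "(\<Sum>v=1..r. rho r (Var v)) = rho r (Var r) + (\<Sum>v=1..<r. rho r (Var v))"
    using assms by (intro sum.last_plus) simp
  also have "\<dots> = (Var 1 - Var 0) + (\<Sum>v=1..<r. Var (Suc v))"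
    using assms by (simp add: rho_def)
  also have "(\<Sum>v=1..<r. Var (Suc v)) = (\<Sum>v=2..r. Var v)"
    by (metis Suc_1 atLeastLessThanSuc_atLeastAtMost sum.shift_bounds_Suc_ivl)
  also have "Var 1 - Var 0 + (\<Sum>v=2..r. Var v) = (\<Sum>v=1..r. Var v) - Var 0"
    using assms sum.atLeast_Suc_atMost[of 1 r Var] by (simp add: numeral_2_eq_2)
  finally show ?thesis
    using assms by (simp add: rho_def pc_def subst_add subst_mult subst_sum Const_diff algebra_simps)
qed

lemma rho_inv_pc:
  assumes "3 \<le> r"
  shows "rho_inv r (pc r c) = pc r (c + 1)"
  using rho_inv_rho[OF assms pc_Rset, of "c + 1"] by (simp add: rho_pc[OF assms])

lemma lists_R_Cons: "x # xs \<in> lists_R r (Suc n) \<longleftrightarrow> x \<in> Rset r \<and> xs \<in> lists_R r n"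
  by (auto simp: lists_R_def)

lemma lists_R_SucE:
  assumes "xs \<in> lists_R r (Suc n)"
  obtains x xs' where "xs = x # xs'" "x \<in> Rset r" "xs' \<in> lists_R r n"
  using assms by (cases xs) (auto simp: lists_R_def)

lemma lists_R_update: "xs \<in> lists_R r n \<Longrightarrow> a \<in> Rset r \<Longrightarrow> xs[j := a] \<in> lists_R r n"
  by (auto simp: lists_R_def dest: set_update_subset_insert[THEN subsetD])

lemma tgensE [consumes 1, case_names additive homogeneous balanced]:
  assumes "g \<in> tgens r sl"
  obtains (additive) xs j a b
    where "g = dl (xs[j := a + b]) - dl (xs[j := a]) - dl (xs[j := b])"
      "xs \<in> lists_R r (length sl)" "j < length sl" "a \<in> Rset r" "b \<in> Rset r"
  | (homogeneous) xs j q
    where "g = dl (xs[j := Const q * xs ! j]) - Poly_Mapping.single xs q"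
      "xs \<in> lists_R r (length sl)" "j < length sl"
  | (balanced) xs j c
    where "g = dl (xs[j := xs ! j * fst (sl ! j) c]) - dl (xs[Suc j := c * xs ! Suc j])"
      "xs \<in> lists_R r (length sl)" "Suc j < length sl" "c \<in> snd (sl ! j)"
  using assms unfolding tgens_def by blast

lemma trel_additive:
  "xs \<in> lists_R r (length sl) \<Longrightarrow> j < length sl \<Longrightarrow> a \<in> Rset r \<Longrightarrow> b \<in> Rset r \<Longrightarrow>
   dl (xs[j := a + b]) - dl (xs[j := a]) - dl (xs[j := b]) \<in> trel r sl"
  by (rule trel.gen) (unfold tgens_def, blast)

lemma trel_homogeneous:
  "xs \<in> lists_R r (length sl) \<Longrightarrow> j < length sl \<Longrightarrow>
   dl (xs[j := Const q * xs ! j]) - Poly_Mapping.single xs q \<in> trel r sl"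
  by (rule trel.gen) (unfold tgens_def, blast)

lemma trel_balanced:
  "xs \<in> lists_R r (length sl) \<Longrightarrow> Suc j < length sl \<Longrightarrow> c \<in> snd (sl ! j) \<Longrightarrow>
   dl (xs[j := xs ! j * fst (sl ! j) c]) - dl (xs[Suc j := c * xs ! Suc j]) \<in> trel r sl"
  by (rule trel.gen) (unfold tgens_def, blast)

lemma trel_zero_slot: "xs \<in> lists_R r (length sl) \<Longrightarrow> j < length sl \<Longrightarrow> dl (xs[j := 0]) \<in> trel r sl"
  using trel_homogeneous[of xs r sl j 0] by simp

lemma lookup_scal: "Poly_Mapping.lookup (scal q u) xs = q * Poly_Mapping.lookup u xs"
proof -
  have "Poly_Mapping.lookup (scal q u) xs =
        (\<Sum>k\<in>Poly_Mapping.keys u. (q * Poly_Mapping.lookup u k when k = xs))"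
    by (simp add: scal_def lookup_sum lookup_single)
  also have "\<dots> = q * Poly_Mapping.lookup u xs"
    by (cases "xs \<in> Poly_Mapping.keys u") (auto simp: when_def in_keys_iff)
  finally show ?thesis .
qed

lemma scal_single: "scal q (Poly_Mapping.single xs a) = Poly_Mapping.single xs (q * a)"
  by (rule poly_mapping_eqI) (simp add: lookup_scal lookup_single when_def)

lemma scal_diff: "scal q (u - v) = scal q u - scal q v"
  by (rule poly_mapping_eqI) (simp add: lookup_scal lookup_minus algebra_simps)

lemma scal_0 [simp]: "scal q 0 = 0"
  by (simp add: scal_def)

lemma scal_add: "scal q (u + v) = scal q u + scal q v"
  by (rule poly_mapping_eqI) (simp add: lookup_scal lookup_add algebra_simps)

lemma scal_sum: "scal q (\<Sum>i\<in>I. f i) = (\<Sum>i\<in>I. scal q (f i))"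
  by (induction I rule: infinite_finite_induct) (simp_all add: scal_add)

lemma trel_uminus: "u \<in> trel r sl \<Longrightarrow> - u \<in> trel r sl"
proof -
  have "scal (-1) u = - u"
    by (rule poly_mapping_eqI) (simp add: lookup_scal)
  then show "u \<in> trel r sl \<Longrightarrow> - u \<in> trel r sl"
    by (metis trel.smul)
qed

lemma trel_diff: "u \<in> trel r sl \<Longrightarrow> v \<in> trel r sl \<Longrightarrow> u - v \<in> trel r sl"
  by (metis diff_conv_add_uminus trel.add trel_uminus)

lemma trel_sum: "(\<And>i. i \<in> I \<Longrightarrow> f i \<in> trel r sl) \<Longrightarrow> (\<Sum>i\<in>I. f i) \<in> trel r sl"
  by (induction I rule: infinite_finite_induct) (auto intro: trel.zero trel.add)

lemma linext_superset:
  assumes "finite K" "Poly_Mapping.keys u \<subseteq> K"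
  shows "linext g u = (\<Sum>k\<in>K. Poly_Mapping.single (g k) (Poly_Mapping.lookup u k))"
  unfolding linext_def using assms
  by (intro sum.mono_neutral_cong_left) (auto simp: in_keys_iff)

lemma linext_0 [simp]: "linext g 0 = 0"
  by (simp add: linext_def)

lemma linext_add: "linext g (u + v) = linext g u + linext g v"
proof -
  let ?K = "Poly_Mapping.keys u \<union> Poly_Mapping.keys v"
  have "linext g (u + v) = (\<Sum>k\<in>?K. Poly_Mapping.single (g k) (Poly_Mapping.lookup (u + v) k))"
    by (rule linext_superset) (auto simp: keys_add)
  also have "\<dots> = (\<Sum>k\<in>?K. Poly_Mapping.single (g k) (Poly_Mapping.lookup u k) +
                         Poly_Mapping.single (g k) (Poly_Mapping.lookup v k))"
    by (simp add: lookup_add single_add)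
  also have "\<dots> = linext g u + linext g v"
    by (simp add: sum.distrib linext_superset[of ?K])
  finally show ?thesis .
qed

lemma linext_single: "linext g (Poly_Mapping.single xs a) = Poly_Mapping.single (g xs) a"
  by (cases "a = 0") (simp_all add: linext_def)

lemma linext_dl: "linext g (dl xs) = dl (g xs)"
  by (simp add: dl_def linext_single)

lemma linext_diff: "linext g (u - v) = linext g u - linext g v"
  by (metis add_diff_cancel_right' diff_add_cancel linext_add)

lemma linext_sum: "linext g (\<Sum>i\<in>I. f i) = (\<Sum>i\<in>I. linext g (f i))"
  by (induction I rule: infinite_finite_induct) (auto simp: linext_add)

lemma linext_scal: "linext g (scal q u) = scal q (linext g u)"
proof -
  have "linext g (scal q u) =
      (\<Sum>k\<in>Poly_Mapping.keys u. Poly_Mapping.single (g k) (q * Poly_Mapping.lookup u k))"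
    by (simp add: scal_def linext_sum linext_single)
  also have "\<dots> = scal q (linext g u)"
    by (simp add: linext_def scal_sum scal_single)
  finally show ?thesis .
qed

lemma trel_linext:
  assumes "u \<in> trel r sl" and gens: "\<And>g. g \<in> tgens r sl \<Longrightarrow> linext h g \<in> trel r sl'"
  shows "linext h u \<in> trel r sl'"
  using assms(1)
  by induction (auto intro: gens trel.intros simp: linext_add linext_scal)

lemma trel_Cons:
  assumes "u \<in> trel r sl" "x \<in> Rset r"
  shows "linext (Cons x) u \<in> trel r (p # sl)"
  using assms(1)
proof (rule trel_linext)
  fix g assume "g \<in> tgens r sl"
  then show "linext (Cons x) g \<in> trel r (p # sl)"
  proof (cases rule: tgensE)
    case (additive xs j a b)
    then show ?thesis
      using trel_additive[of "x # xs" r "p # sl" "Suc j" a b] assms(2)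
      by (simp add: lists_R_Cons linext_diff linext_dl)
  next
    case (homogeneous xs j q)
    then show ?thesis
      using trel_homogeneous[of "x # xs" r "p # sl" "Suc j" q] assms(2)
      by (simp add: lists_R_Cons linext_diff linext_dl linext_single)
  next
    case (balanced xs j c)
    then show ?thesis
      using trel_balanced[of "x # xs" r "p # sl" "Suc j" c] assms(2)
      by (simp add: lists_R_Cons linext_diff linext_dl)
  qed
qed

section \<open>Coordinates on the tensor product\<close>

text \<open>A slot of the tensor product: the twist of the right action on its factor, the index \<open>i\<close>
  of the ring \<open>R\<^sup>\<sigma>\<^sup>\<^sub>i\<close> over which it is tensored with the next slot (\<open>None\<close> for \<open>R\<close>), and the
  shift \<open>h\<close> by which the twist moves \<open>p\<^sub>c\<close> to \<open>p\<^sub>c\<^sub>-\<^sub>h\<close>.\<close>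
datatype slot_desc = Slot (twist: "poly \<Rightarrow> poly") (bal_index: "nat option") (shift: rat)

definition bal_ring :: "nat \<Rightarrow> slot_desc \<Rightarrow> poly set" where
  "bal_ring r t = (case bal_index t of None \<Rightarrow> Rset r | Some i \<Rightarrow> Inv r i)"

definition slot_pairs :: "nat \<Rightarrow> slot_desc list \<Rightarrow> ((poly \<Rightarrow> poly) \<times> poly set) list" where
  "slot_pairs r T = map (\<lambda>t. (twist t, bal_ring r t)) T"

definition admissible :: "nat \<Rightarrow> slot_desc \<Rightarrow> bool" where
  "admissible r t \<longleftrightarrow> ring_endo r (twist t) \<and> (\<forall>c. twist t (pc r c) = pc r (c - shift t)) \<and>
     (\<forall>i. bal_index t = Some i \<longrightarrow> 1 \<le> i \<and> i \<le> r)"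

text \<open>As a module over \<open>bal_ring r t\<close>, \<open>R\<close> is free on the elements \<open>basis_elt r t b\<close>
  (\<open>1\<close> and \<open>\<alpha>\<^sub>i\<close> over \<open>R\<^sup>\<sigma>\<^sup>\<^sub>i\<close>; over \<open>R\<close> itself \<open>1\<close> is listed twice, the second
  coordinate being \<open>0\<close>), with coordinates \<open>component r t b\<close>.\<close>
definition basis_elt :: "nat \<Rightarrow> slot_desc \<Rightarrow> bool \<Rightarrow> poly" where
  "basis_elt r t b = (case bal_index t of None \<Rightarrow> 1 | Some i \<Rightarrow> if b then alpha r i else 1)"

definition component :: "nat \<Rightarrow> slot_desc \<Rightarrow> bool \<Rightarrow> poly \<Rightarrow> poly" where
  "component r t b c = (case bal_index t of
       None \<Rightarrow> if b then 0 else c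
     | Some i \<Rightarrow> if b then odd_coeff r i c else even_part r i c)"

lemma length_slot_pairs [simp]: "length (slot_pairs r T) = length T"
  by (simp add: slot_pairs_def)

lemma slot_pairs_Cons [simp]: "slot_pairs r (t # T) = (twist t, bal_ring r t) # slot_pairs r T"
  by (simp add: slot_pairs_def)

lemma slot_pairs_eq_Nil_iff [simp]: "slot_pairs r T = [] \<longleftrightarrow> T = []"
  by (simp add: slot_pairs_def)

lemma nth_slot_pairs: "j < length T \<Longrightarrow> slot_pairs r T ! j = (twist (T ! j), bal_ring r (T ! j))"
  by (simp add: slot_pairs_def)

context
  fixes r :: nat and t :: slot_desc
  assumes r3: "3 \<le> r" and adm: "admissible r t"
begin

lemma admissible_cases:
  obtains "bal_index t = None" "bal_ring r t = Rset r"
  | i where "bal_index t = Some i" "1 \<le> i" "i \<le> r" "bal_ring r t = Inv r i"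
  using adm by (cases "bal_index t") (auto simp: admissible_def bal_ring_def)

lemma Const_bal_ring: "Const q \<in> bal_ring r t"
  by (rule admissible_cases) (simp_all add: Inv_Const[OF r3])

lemma pc_bal_ring: "pc r c \<in> bal_ring r t"
  by (rule admissible_cases) (simp_all add: pc_Rset pc_Inv[OF r3])

lemma bal_ring_Rset: "z \<in> bal_ring r t \<Longrightarrow> z \<in> Rset r"
  by (rule admissible_cases) (auto simp: Inv_def)

lemma basis_elt_Rset: "basis_elt r t b \<in> Rset r"
  by (rule admissible_cases) (simp_all add: basis_elt_def alpha_Rset[OF r3])

lemma component_bal_ring:
  assumes "c \<in> Rset r"
  shows "component r t b c \<in> bal_ring r t"
  using assms by (cases rule: admissible_cases) (simp_all add: component_def bal_ring_def sigma_decomp[OF r3])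

lemma component_Rset: "c \<in> Rset r \<Longrightarrow> component r t b c \<in> Rset r"
  by (rule bal_ring_Rset[OF component_bal_ring])

lemma component_decomp:
  assumes "c \<in> Rset r"
  shows "c = component r t False c * basis_elt r t False + component r t True c * basis_elt r t True"
  using assms by (cases rule: admissible_cases) (simp_all add: component_def basis_elt_def sigma_decomp(3)[OF r3])

lemma component_add:
  assumes "c \<in> Rset r" "d \<in> Rset r"
  shows "component r t b (c + d) = component r t b c + component r t b d"
  using assms by (cases rule: admissible_cases) (simp_all add: component_def sigma_decomp_add[OF r3])

lemma component_mult:
  assumes "z \<in> bal_ring r t" "c \<in> Rset r"
  shows "component r t b (z * c) = z * component r t b c"
  using assms by (cases rule: admissible_cases) (simp_all add: component_def sigma_decomp_mult[OF r3])

end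

text \<open>\<open>coord r T xs w\<close> is the coefficient of the pure tensor \<open>xs\<close> at the basis vector
  \<open>1 \<otimes> basis_tail r T w\<close> of the tensor product, a free left \<open>R\<close>-module; the basis is indexed by
  the words \<open>w\<close> of length \<open>length T - 1\<close>.\<close>
primrec coord :: "nat \<Rightarrow> slot_desc list \<Rightarrow> poly list \<Rightarrow> bool list \<Rightarrow> poly" where
  "coord r [] xs w = 0"
| "coord r (t # T) xs w = (if T = [] then (if w = [] then hd xs else 0)
     else (case w of [] \<Rightarrow> 0 | b # w' \<Rightarrow> hd xs * twist t (component r t b (coord r T (tl xs) w'))))"

primrec basis_tail :: "nat \<Rightarrow> slot_desc list \<Rightarrow> bool list \<Rightarrow> poly list" where
  "basis_tail r [] w = []"
| "basis_tail r (t # T) w = (if T = [] then []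
     else (case w of [] \<Rightarrow> [] | b # w' \<Rightarrow> basis_elt r t b # basis_tail r T w'))"

lemma coord_mult_first: "T \<noteq> [] \<Longrightarrow> coord r T ((c * x) # xs) w = c * coord r T (x # xs) w"
  by (cases T) (auto split: list.split)

definition coord_fv :: "nat \<Rightarrow> slot_desc list \<Rightarrow> fv \<Rightarrow> bool list \<Rightarrow> poly" where
  "coord_fv r T u w = (\<Sum>xs\<in>Poly_Mapping.keys u. Const (Poly_Mapping.lookup u xs) * coord r T xs w)"

lemma coord_fv_superset:
  assumes "finite K" "Poly_Mapping.keys u \<subseteq> K"
  shows "coord_fv r T u w = (\<Sum>xs\<in>K. Const (Poly_Mapping.lookup u xs) * coord r T xs w)"
  unfolding coord_fv_def using assms
  by (intro sum.mono_neutral_cong_left) (auto simp: in_keys_iff)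

lemma coord_fv_0 [simp]: "coord_fv r T 0 w = 0"
  by (simp add: coord_fv_def)

lemma coord_fv_add: "coord_fv r T (u + v) w = coord_fv r T u w + coord_fv r T v w"
proof -
  let ?K = "Poly_Mapping.keys u \<union> Poly_Mapping.keys v"
  have "coord_fv r T (u + v) w = (\<Sum>xs\<in>?K. Const (Poly_Mapping.lookup (u + v) xs) * coord r T xs w)"
    by (rule coord_fv_superset) (auto simp: keys_add)
  also have "\<dots> = coord_fv r T u w + coord_fv r T v w"
    by (simp add: lookup_add Const_add distrib_right sum.distrib coord_fv_superset[of ?K])
  finally show ?thesis .
qed

lemma coord_fv_diff: "coord_fv r T (u - v) w = coord_fv r T u w - coord_fv r T v w"
  by (metis add_diff_cancel_right' diff_add_cancel coord_fv_add)

lemma coord_fv_single: "coord_fv r T (Poly_Mapping.single xs q) w = Const q * coord r T xs w"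
  by (cases "q = 0") (simp_all add: coord_fv_def)

lemma coord_fv_dl: "coord_fv r T (dl xs) w = coord r T xs w"
  by (simp add: dl_def coord_fv_single)

lemma coord_fv_sum: "coord_fv r T (\<Sum>i\<in>I. f i) w = (\<Sum>i\<in>I. coord_fv r T (f i) w)"
  by (induction I rule: infinite_finite_induct) (auto simp: coord_fv_add)

lemma coord_fv_scal: "coord_fv r T (scal q u) w = Const q * coord_fv r T u w"
  by (simp add: scal_def coord_fv_sum coord_fv_single Const_mult mult.assoc)
    (simp add: coord_fv_def sum_distrib_left)

lemma coord_fv_linext:
  "coord_fv r T (linext g u) w =
     (\<Sum>xs\<in>Poly_Mapping.keys u. Const (Poly_Mapping.lookup u xs) * coord r T (g xs) w)"
  by (simp add: linext_def coord_fv_sum coord_fv_single)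

lemma finite_bool_lists [simp]: "finite {w :: bool list. length w = n}"
  using finite_lists_length_eq[of "UNIV :: bool set" n] by simp

lemma sum_bool_lists_Suc:
  "(\<Sum>w | length w = Suc n. f w) = (\<Sum>w | length w = n. f (False # w) + f (True # w))"
proof -
  have "{w :: bool list. length w = Suc n} = Cons False ` {w. length w = n} \<union> Cons True ` {w. length w = n}"
    by (auto simp: length_Suc_conv image_iff)
  moreover have "(\<Sum>w \<in> Cons False ` {w. length w = n} \<union> Cons True ` {w. length w = n}. f w) =
      (\<Sum>w \<in> Cons False ` {w. length w = n}. f w) + (\<Sum>w \<in> Cons True ` {w. length w = n}. f w)"
    by (rule sum.union_disjoint) auto
  ultimately have "(\<Sum>w | length w = Suc n. f w) =
      (\<Sum>w \<in> Cons False ` {w. length w = n}. f w) + (\<Sum>w \<in> Cons True ` {w. length w = n}. f w)"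
    by simp
  then show ?thesis
    by (simp add: sum.reindex sum.distrib)
qed

context
  fixes r :: nat
  assumes r3: "3 \<le> r"
begin

lemma coord_Rset:
  "\<forall>t\<in>set T. admissible r t \<Longrightarrow> xs \<in> lists_R r (length T) \<Longrightarrow> coord r T xs w \<in> Rset r"
proof (induction T arbitrary: xs w)
  case (Cons t T)
  from Cons.prems(2) obtain x xs' where xs: "xs = x # xs'" "x \<in> Rset r" "xs' \<in> lists_R r (length T)"
    by (auto elim: lists_R_SucE)
  have "twist t (component r t b (coord r T xs' w')) \<in> Rset r" for b w'
    using Cons xs admissible_def
    by (auto intro!: ring_endo_Rset[of r "twist t"] component_Rset[OF r3])
  then show ?case
    using xs by (auto split: list.split)
qed simp

lemma coord_additive:
  "\<forall>t\<in>set T. admissible r t \<Longrightarrow> xs \<in> lists_R r (length T) \<Longrightarrow> j < length T \<Longrightarrow>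
   a \<in> Rset r \<Longrightarrow> b \<in> Rset r \<Longrightarrow>
   coord r T (xs[j := a + b]) w = coord r T (xs[j := a]) w + coord r T (xs[j := b]) w"
proof (induction T arbitrary: xs w j)
  case (Cons t T)
  from Cons.prems(2) obtain x xs' where xs: "xs = x # xs'" "x \<in> Rset r" "xs' \<in> lists_R r (length T)"
    by (auto elim: lists_R_SucE)
  have adm: "admissible r t" "\<forall>t\<in>set T. admissible r t" using Cons.prems by auto
  then have endo: "ring_endo r (twist t)" by (simp add: admissible_def)
  show ?case
  proof (cases "T = [] \<or> w = [] \<or> j = 0")
    case True
    then show ?thesis using xs Cons.prems(3) by (auto simp: distrib_right split: list.split)
  next
    case False
    then obtain bb w' j' where w: "w = bb # w'" and j: "j = Suc j'" "j' < length T"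
      using Cons.prems(3) by (cases w; cases j) auto
    have "coord r T (xs'[j' := a + b]) w' = coord r T (xs'[j' := a]) w' + coord r T (xs'[j' := b]) w'"
      using Cons.IH[OF adm(2) xs(3) j(2)] Cons.prems(4,5) .
    moreover have "coord r T (xs'[j' := a]) w' \<in> Rset r" "coord r T (xs'[j' := b]) w' \<in> Rset r"
      using coord_Rset[OF adm(2) lists_R_update[OF xs(3)]] Cons.prems(4,5) by auto
    ultimately show ?thesis
      using False w j xs adm(1)
      by (simp add: component_add[OF r3 adm(1)] ring_endo_add[OF endo] distrib_left)
  qed
qed simp

lemma coord_homogeneous:
  "\<forall>t\<in>set T. admissible r t \<Longrightarrow> xs \<in> lists_R r (length T) \<Longrightarrow> j < length T \<Longrightarrow>
   coord r T (xs[j := Const q * xs ! j]) w = Const q * coord r T xs w"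
proof (induction T arbitrary: xs w j)
  case (Cons t T)
  from Cons.prems(2) obtain x xs' where xs: "xs = x # xs'" "x \<in> Rset r" "xs' \<in> lists_R r (length T)"
    by (auto elim: lists_R_SucE)
  have adm: "admissible r t" "\<forall>t\<in>set T. admissible r t" using Cons.prems by auto
  then have endo: "ring_endo r (twist t)" by (simp add: admissible_def)
  show ?case
  proof (cases "T = [] \<or> w = [] \<or> j = 0")
    case True
    then show ?thesis using xs Cons.prems(3) by (auto simp: mult.assoc split: list.split)
  next
    case False
    then obtain bb w' j' where w: "w = bb # w'" and j: "j = Suc j'" "j' < length T"
      using Cons.prems(3) by (cases w; cases j) auto
    have "coord r T (xs'[j' := Const q * xs' ! j']) w' = Const q * coord r T xs' w'"
      using Cons.IH[OF adm(2) xs(3) j(2)] .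
    then show ?thesis
      using False w j xs coord_Rset[OF adm(2) xs(3)]
      by (simp add: component_mult[OF r3 adm(1) Const_bal_ring[OF r3 adm(1)]]
          ring_endo_mult[OF endo] ring_endo_Const[OF endo] mult.left_commute)
  qed
qed simp

lemma coord_balanced:
  "\<forall>t\<in>set T. admissible r t \<Longrightarrow> xs \<in> lists_R r (length T) \<Longrightarrow> Suc j < length T \<Longrightarrow>
   c \<in> bal_ring r (T ! j) \<Longrightarrow>
   coord r T (xs[j := xs ! j * twist (T ! j) c]) w = coord r T (xs[Suc j := c * xs ! Suc j]) w"
proof (induction T arbitrary: xs w j)
  case (Cons t T)
  from Cons.prems(2) obtain x xs' where xs: "xs = x # xs'" "x \<in> Rset r" "xs' \<in> lists_R r (length T)"
    by (auto elim: lists_R_SucE)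
  have adm: "admissible r t" "\<forall>t\<in>set T. admissible r t" using Cons.prems by auto
  then have endo: "ring_endo r (twist t)" by (simp add: admissible_def)
  have T: "T \<noteq> []" using Cons.prems(3) by auto
  show ?case
  proof (cases w)
    case (Cons bb w')
    show ?thesis
    proof (cases j)
      case 0
      from xs(3) T obtain x1 xs'' where x1: "xs' = x1 # xs''" by (cases xs') (auto simp: lists_R_def)
      have "component r t bb (coord r T ((c * x1) # xs'') w') =
            c * component r t bb (coord r T xs' w')"
        using component_mult[OF r3 adm(1), of c "coord r T xs' w'"] Cons.prems(4) 0
          coord_Rset[OF adm(2) xs(3)] coord_mult_first[OF T] x1 by simp
      then show ?thesis
        using T Cons xs 0 x1 by (simp add: ring_endo_mult[OF endo] mult.assoc)
    next
      case (Suc j')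
      then have "coord r T (xs'[j' := xs' ! j' * twist (T ! j') c]) w' =
          coord r T (xs'[Suc j' := c * xs' ! Suc j']) w'"
        using Cons.IH[OF adm(2) xs(3)] Cons.prems(3,4) by simp
      then show ?thesis using T Cons xs Suc by simp
    qed
  qed (use T in simp)
qed simp

lemma coord_fv_trel:
  assumes adm: "\<forall>t\<in>set T. admissible r t" and u: "u \<in> trel r (slot_pairs r T)"
  shows "coord_fv r T u w = 0"
  using u
proof induction
  case (gen g)
  then show ?case
  proof (cases rule: tgensE)
    case (additive xs j a b)
    then show ?thesis
      using coord_additive[OF adm, of xs j a b w] by (simp add: coord_fv_diff coord_fv_dl)
  next
    case (homogeneous xs j q)
    then show ?thesis
      using coord_homogeneous[OF adm, of xs j q w]
      by (simp add: coord_fv_diff coord_fv_dl coord_fv_single)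
  next
    case (balanced xs j c)
    then show ?thesis
      using coord_balanced[OF adm, of xs j c w] by (simp add: nth_slot_pairs coord_fv_diff coord_fv_dl)
  qed
qed (simp_all add: coord_fv_add coord_fv_scal)

lemma basis_tail_lists:
  "\<forall>t\<in>set T. admissible r t \<Longrightarrow> length w = length T - 1 \<Longrightarrow> basis_tail r T w \<in> lists_R r (length T - 1)"
proof (induction T arbitrary: w)
  case (Cons t T)
  show ?case
  proof (cases "T = []")
    case False
    with Cons.prems(2) obtain b w' where "w = b # w'" "length w' = length T - 1"
      by (cases w) auto
    with Cons False show ?thesis
      by (cases T) (auto simp: lists_R_Cons basis_elt_Rset[OF r3])
  qed (simp add: lists_R_def)
qed (simp add: lists_R_def)

lemma pure_tensor_split:
  assumes adm: "admissible r t" and x: "x \<in> Rset r" and c: "c \<in> Rset r"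
    and e: "e \<in> lists_R r n" and sl: "length sl = Suc n"
  shows "dl (x # c # e) - dl (x * twist t (component r t False c) # basis_elt r t False # e)
         - dl (x * twist t (component r t True c) # basis_elt r t True # e)
         \<in> trel r ((twist t, bal_ring r t) # sl)"
    (is "_ \<in> trel r ?sl")
proof -
  let ?c = "component r t" and ?\<beta> = "basis_elt r t"
  let ?d = "\<lambda>b. dl (x # ?c b c * ?\<beta> b # e)"
    and ?D = "\<lambda>b. dl (x * twist t (?c b c) # ?\<beta> b # e)"
  have add: "dl (x # c # e) - ?d False - ?d True \<in> trel r ?sl"
    using trel_additive[of "x # c # e" r ?sl 1] x c e sl arg_cong[OF component_decomp[OF r3 adm c],
        where f = "\<lambda>c. dl (x # c # e)"] component_Rset[OF r3 adm c] basis_elt_Rset[OF r3 adm]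
    by (simp add: lists_R_Cons Rset_mult)
  have bal: "?D b - ?d b \<in> trel r ?sl" for b
    using trel_balanced[of "x # ?\<beta> b # e" r ?sl 0 "?c b c"] x e sl
      basis_elt_Rset[OF r3 adm] component_bal_ring[OF r3 adm c]
    by (simp add: lists_R_Cons)
  have "dl (x # c # e) - ?D False - ?D True =
      (dl (x # c # e) - ?d False - ?d True) - (?D False - ?d False) - (?D True - ?d True)"
    by (simp add: algebra_simps)
  then show ?thesis
    using trel_diff[OF trel_diff[OF add bal[of False]] bal[of True]] by simp
qed

lemma pure_tensor_expansion:
  "\<forall>t\<in>set T. admissible r t \<Longrightarrow> T \<noteq> [] \<Longrightarrow> xs \<in> lists_R r (length T) \<Longrightarrow>
   dl xs - (\<Sum>w | length w = length T - 1. dl (coord r T xs w # basis_tail r T w))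
   \<in> trel r (slot_pairs r T)"
proof (induction T arbitrary: xs)
  case (Cons t T)
  from Cons.prems(3) obtain x xs' where xs: "xs = x # xs'" "x \<in> Rset r" "xs' \<in> lists_R r (length T)"
    by (auto elim: lists_R_SucE)
  have adm: "admissible r t" "\<forall>t\<in>set T. admissible r t" using Cons.prems by auto
  show ?case
  proof (cases "T = []")
    case True
    then show ?thesis using xs by (simp add: lists_R_def trel.zero)
  next
    case False
    then obtain n where n: "length T = Suc n" by (cases T) auto
    let ?sl = "slot_pairs r (t # T)" and ?c = "coord r T xs'" and ?e = "basis_tail r T"
    let ?d = "\<lambda>w. dl (x # ?c w # ?e w)"
      and ?D = "\<lambda>b w. dl (x * twist t (component r t b (?c w)) # basis_elt r t b # ?e w)"
    have IH: "dl (x # xs') - (\<Sum>w | length w = n. ?d w) \<in> trel r ?sl"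
      using trel_Cons[OF Cons.IH[OF adm(2) False xs(3)] xs(2), of "(twist t, bal_ring r t)"] n
      by (simp add: linext_diff linext_dl linext_sum)
    have split: "(\<Sum>w | length w = n. ?d w - ?D False w - ?D True w) \<in> trel r ?sl"
      using pure_tensor_split[OF adm(1) xs(2) coord_Rset[OF adm(2) xs(3)] basis_tail_lists[OF adm(2)]] n
      by (intro trel_sum) simp
    have "(\<Sum>w | length w = length (t # T) - 1. dl (coord r (t # T) xs w # basis_tail r (t # T) w)) =
        (\<Sum>w | length w = n. ?D False w + ?D True w)"
      using False n xs by (simp add: sum_bool_lists_Suc)
    then show ?thesis
      using trel.add[OF IH split] xs by (simp add: sum_subtractf algebra_simps)
  qed
qed simp

lemma sum_first_slot:
  assumes "finite I" and p: "\<And>i. i \<in> I \<Longrightarrow> p i \<in> Rset r" and e: "0 # e \<in> lists_R r (length sl)"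
  shows "(\<Sum>i\<in>I. Poly_Mapping.single (p i # e) (q i)) - dl ((\<Sum>i\<in>I. Const (q i) * p i) # e)
    \<in> trel r sl"
  using assms(1) p
proof (induction I rule: finite_induct)
  case empty
  then show ?case
    using trel_zero_slot[OF e, of 0] e by (cases sl) (auto simp: lists_R_def intro: trel_uminus)
next
  case (insert i F)
  let ?S = "\<Sum>i\<in>F. Const (q i) * p i" and ?a = "Const (q i) * p i"
  have l: "p i # e \<in> lists_R r (length sl)" and sl: "0 < length sl"
    using e insert.prems by (auto simp: lists_R_def)
  have hom: "dl (?a # e) - Poly_Mapping.single (p i # e) (q i) \<in> trel r sl"
    using trel_homogeneous[OF l sl, of "q i"] by simp
  have add: "dl ((?a + ?S) # e) - dl (?a # e) - dl (?S # e) \<in> trel r sl"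
    using trel_additive[OF l sl, of ?a ?S] insert.prems by (simp add: Rset_mult Rset_sum)
  have "(\<Sum>i\<in>insert i F. Poly_Mapping.single (p i # e) (q i)) - dl ((?a + ?S) # e) =
      ((\<Sum>i\<in>F. Poly_Mapping.single (p i # e) (q i)) - dl (?S # e))
      - (dl (?a # e) - Poly_Mapping.single (p i # e) (q i)) - (dl ((?a + ?S) # e) - dl (?a # e) - dl (?S # e))"
    using insert.hyps by (simp add: algebra_simps)
  then show ?case
    using trel_diff[OF trel_diff[OF insert.IH hom] add] insert by (simp add: add_ac)
qed

lemma tensor_expansion:
  assumes adm: "\<forall>t\<in>set T. admissible r t" and T: "T \<noteq> []" and u: "u \<in> Vfree r (length T)"
  shows "u - (\<Sum>w | length w = length T - 1. dl (coord_fv r T u w # basis_tail r T w))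
    \<in> trel r (slot_pairs r T)"
proof -
  let ?K = "Poly_Mapping.keys u" and ?W = "{w :: bool list. length w = length T - 1}"
  let ?q = "Poly_Mapping.lookup u" and ?b = "\<lambda>xs w. coord r T xs w # basis_tail r T w"
  have K: "xs \<in> lists_R r (length T)" if "xs \<in> ?K" for xs
    using that u by (auto simp: Vfree_def)
  have pure: "(\<Sum>xs\<in>?K. scal (?q xs) (dl xs - (\<Sum>w\<in>?W. dl (?b xs w)))) \<in> trel r (slot_pairs r T)"
    by (intro trel_sum trel.smul pure_tensor_expansion[OF adm T K])
  have first: "(\<Sum>w\<in>?W. (\<Sum>xs\<in>?K. Poly_Mapping.single (?b xs w) (?q xs)) - dl (coord_fv r T u w # basis_tail r T w))
      \<in> trel r (slot_pairs r T)"
  proof (intro trel_sum)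
    fix w assume "w \<in> ?W"
    then have "0 # basis_tail r T w \<in> lists_R r (length (slot_pairs r T))"
      using basis_tail_lists[OF adm] T by (cases T) (auto simp: lists_R_def)
    from sum_first_slot[where p = "\<lambda>xs. coord r T xs w" and q = ?q, OF finite_keys[of u] _ this]
    show "(\<Sum>xs\<in>?K. Poly_Mapping.single (?b xs w) (?q xs)) - dl (coord_fv r T u w # basis_tail r T w)
        \<in> trel r (slot_pairs r T)"
      using coord_Rset[OF adm K] by (simp add: coord_fv_def)
  qed
  have "(\<Sum>xs\<in>?K. scal (?q xs) (dl xs - (\<Sum>w\<in>?W. dl (?b xs w)))) =
      u - (\<Sum>w\<in>?W. \<Sum>xs\<in>?K. Poly_Mapping.single (?b xs w) (?q xs))"
    using poly_mapping_sum_single[of u] sum.swap[of "\<lambda>xs w. Poly_Mapping.single (?b xs w) (?q xs)" ?W ?K]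
    by (simp add: scal_diff scal_sum scal_single dl_def sum_subtractf)
  then show ?thesis
    using trel.add[OF pure first] by (simp add: sum_subtractf)
qed

lemma trel_if_coord_fv_eq_0:
  assumes adm: "\<forall>t\<in>set T. admissible r t" and T: "T \<noteq> []" and u: "u \<in> Vfree r (length T)"
    and zero: "\<And>w. coord_fv r T u w = 0"
  shows "u \<in> trel r (slot_pairs r T)"
proof -
  have zeros: "(\<Sum>w | length w = length T - 1. dl (0 # basis_tail r T w)) \<in> trel r (slot_pairs r T)"
  proof (intro trel_sum)
    fix w :: "bool list" assume "w \<in> {w. length w = length T - 1}"
    then have "0 # basis_tail r T w \<in> lists_R r (length (slot_pairs r T))"
      using basis_tail_lists[OF adm] T by (cases T) (auto simp: lists_R_def)
    then show "dl (0 # basis_tail r T w) \<in> trel r (slot_pairs r T)"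
      using trel_zero_slot[of "0 # basis_tail r T w" r "slot_pairs r T" 0] T by simp
  qed
  then show ?thesis
    using trel.add[OF tensor_expansion[OF adm T u] zeros] by (simp add: zero)
qed

end

definition mult_slot :: "nat \<Rightarrow> poly \<Rightarrow> poly list \<Rightarrow> poly list" where
  "mult_slot j m xs = xs[j := xs ! j * m]"

lemma mult_slot_lists_R:
  "xs \<in> lists_R r n \<Longrightarrow> j < n \<Longrightarrow> m \<in> Rset r \<Longrightarrow> mult_slot j m xs \<in> lists_R r n"
  unfolding mult_slot_def by (intro lists_R_update Rset_mult) (auto simp: lists_R_def)

lemma mult_slot_update_same: "j < length xs \<Longrightarrow> mult_slot j m (xs[j := v]) = (mult_slot j m xs)[j := v * m]"
  by (simp add: mult_slot_def)

lemma mult_slot_update_other: "i \<noteq> j \<Longrightarrow> mult_slot j m (xs[i := v]) = (mult_slot j m xs)[i := v]"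
  by (simp add: mult_slot_def list_update_swap)

lemma nth_mult_slot: "i < length xs \<Longrightarrow> mult_slot j m xs ! i = (if i = j then xs ! i * m else xs ! i)"
  by (simp add: mult_slot_def)

lemma trel_mult_slot:
  assumes u: "u \<in> trel r sl" and m: "m \<in> Rset r" and j: "j < length sl"
  shows "linext (mult_slot j m) u \<in> trel r sl"
  using u
proof (rule trel_linext)
  fix g assume "g \<in> tgens r sl"
  then show "linext (mult_slot j m) g \<in> trel r sl"
  proof (cases rule: tgensE)
    case (additive xs i a b)
    have "length xs = length sl" using additive(2) by (simp add: lists_R_def)
    then show ?thesis
      using trel_additive[OF mult_slot_lists_R[OF additive(2) j m] additive(3), of "a * m" "b * m"]
        trel_additive[OF mult_slot_lists_R[OF additive(2) j m] additive(3,4,5)] additive m j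
      by (cases "i = j")
        (simp_all add: linext_diff linext_dl mult_slot_update_same mult_slot_update_other distrib_right
          Rset_mult)
  next
    case (homogeneous xs i q)
    have "length xs = length sl" using homogeneous(2) by (simp add: lists_R_def)
    then show ?thesis
      using trel_homogeneous[OF mult_slot_lists_R[OF homogeneous(2) j m] homogeneous(3), of q] homogeneous j
      by (cases "i = j")
        (simp_all add: linext_diff linext_dl linext_single mult_slot_update_same
          mult_slot_update_other nth_mult_slot mult.assoc)
  next
    case (balanced xs i c)
    have "length xs = length sl" using balanced(2) by (simp add: lists_R_def)
    then have "linext (mult_slot j m) g =
        dl ((mult_slot j m xs)[i := mult_slot j m xs ! i * fst (sl ! i) c])
        - dl ((mult_slot j m xs)[Suc i := c * mult_slot j m xs ! Suc i])"
      using balanced j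
      by (cases "j = i"; cases "j = Suc i")
        (simp_all add: linext_diff linext_dl mult_slot_update_same mult_slot_update_other
          nth_mult_slot mult_ac)
    then show ?thesis
      using trel_balanced[OF mult_slot_lists_R[OF balanced(2) j m] balanced(3,4)] by simp
  qed
qed

lemma cls_eq: "v - w \<in> trel r sl \<Longrightarrow> cls r sl v = cls r sl w"
  unfolding cls_def by (metis (no_types, opaque_lifting) diff_add_cancel diff_diff_eq2 trel.add trel_diff)

lemma cls_self: "v \<in> Vfree r (length sl) \<Longrightarrow> v \<in> cls r sl v"
  by (simp add: cls_def trel.zero)

lemma Vfree_linext_mult_slot:
  assumes "u \<in> Vfree r (length sl)" "j < length sl" "m \<in> Rset r"
  shows "linext (mult_slot j m) u \<in> Vfree r (length sl)"
proof -
  have "Poly_Mapping.keys (linext (mult_slot j m) u) \<subseteq>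
      (\<Union>xs\<in>Poly_Mapping.keys u. Poly_Mapping.keys (Poly_Mapping.single (mult_slot j m xs) (Poly_Mapping.lookup u xs)))"
    unfolding linext_def by (rule keys_sum)
  then show ?thesis
    using assms mult_slot_lists_R[of _ r "length sl" j m] by (fastforce simp: Vfree_def)
qed

lemma UN_cls_mult_slot:
  assumes u: "u \<in> Vfree r (length sl)" and m: "m \<in> Rset r" and j: "j < length sl"
  shows "(\<Union>a\<in>cls r sl u. cls r sl (linext (mult_slot j m) a)) = cls r sl (linext (mult_slot j m) u)"
proof -
  have "cls r sl (linext (mult_slot j m) a) = cls r sl (linext (mult_slot j m) u)" if "a \<in> cls r sl u" for a
    using trel_mult_slot[OF _ m j, of "a - u"] that by (intro cls_eq) (simp add: cls_def linext_diff)
  then show ?thesis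
    using cls_self[OF u] by blast
qed

lemma tlact_eq: "tlact r sl c A = (\<Union>a\<in>A. cls r sl (linext (mult_slot 0 c) a))"
proof -
  have "(\<lambda>xs. xs[0 := c * xs ! 0]) = mult_slot 0 c"
    by (simp add: fun_eq_iff mult_slot_def mult.commute)
  then show ?thesis by (simp add: tlact_def)
qed

lemma tract_eq:
  "tract r sl c A = (\<Union>a\<in>A. cls r sl (linext (mult_slot (length sl - 1) (fst (last sl) c)) a))"
  by (simp add: tract_def mult_slot_def[abs_def])

lemma tlact_cls:
  "u \<in> Vfree r (length sl) \<Longrightarrow> sl \<noteq> [] \<Longrightarrow> c \<in> Rset r \<Longrightarrow>
   tlact r sl c (cls r sl u) = cls r sl (linext (mult_slot 0 c) u)"
  unfolding tlact_eq by (rule UN_cls_mult_slot) auto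

lemma tract_cls:
  "u \<in> Vfree r (length sl) \<Longrightarrow> sl \<noteq> [] \<Longrightarrow> fst (last sl) c \<in> Rset r \<Longrightarrow>
   tract r sl c (cls r sl u) = cls r sl (linext (mult_slot (length sl - 1) (fst (last sl) c)) u)"
  unfolding tract_eq by (rule UN_cls_mult_slot) auto

lemma trel_linext_diff:
  assumes "\<And>xs. xs \<in> Poly_Mapping.keys u \<Longrightarrow> dl (g xs) - dl (h xs) \<in> trel r sl"
  shows "linext g u - linext h u \<in> trel r sl"
proof -
  have "linext g u - linext h u =
      (\<Sum>xs\<in>Poly_Mapping.keys u. scal (Poly_Mapping.lookup u xs) (dl (g xs) - dl (h xs)))"
    by (simp add: linext_def sum_subtractf scal_diff scal_single dl_def)
  then show ?thesis
    using assms by (simp add: trel_sum trel.smul)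
qed

lemma coord_fv_mult_first:
  assumes "T \<noteq> []" "u \<in> Vfree r (length T)"
  shows "coord_fv r T (linext (mult_slot 0 m) u) w = m * coord_fv r T u w"
proof -
  have "coord r T (mult_slot 0 m xs) w = m * coord r T xs w" if "xs \<in> Poly_Mapping.keys u" for xs
    using that assms coord_mult_first[OF assms(1), where c = m]
    by (cases xs) (auto simp: Vfree_def lists_R_def mult_slot_def mult.commute)
  then have "coord_fv r T (linext (mult_slot 0 m) u) w =
      (\<Sum>xs\<in>Poly_Mapping.keys u. m * (Const (Poly_Mapping.lookup u xs) * coord r T xs w))"
    by (simp add: coord_fv_linext mult.left_commute)
  then show ?thesis
    by (simp add: coord_fv_def sum_distrib_left)
qed

context
  fixes r :: nat
  assumes r3: "3 \<le> r"
begin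

lemma trel_move_pc_left:
  "\<forall>t\<in>set T. admissible r t \<Longrightarrow> T \<noteq> [] \<Longrightarrow> xs \<in> lists_R r (length T) \<Longrightarrow>
   dl (mult_slot (length T - 1) (twist (last T) (pc r c)) xs)
   - dl (mult_slot 0 (pc r (c - sum_list (map shift T))) xs) \<in> trel r (slot_pairs r T)"
proof (induction T arbitrary: xs)
  case (Cons t T)
  from Cons.prems(3) obtain x xs' where xs: "xs = x # xs'" "x \<in> Rset r" "xs' \<in> lists_R r (length T)"
    by (auto elim: lists_R_SucE)
  have adm: "admissible r t" "\<forall>t\<in>set T. admissible r t" using Cons.prems by auto
  then have tw: "twist t (pc r a) = pc r (a - shift t)" for a
    by (simp add: admissible_def)
  show ?case
  proof (cases "T = []")
    case True
    then show ?thesis using xs tw by (simp add: mult_slot_def trel.zero mult.commute)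
  next
    case False
    then obtain n where n: "length T = Suc n" by (cases T) auto
    let ?p = "pc r (c - sum_list (map shift T))" and ?sl = "slot_pairs r (t # T)"
    have IH: "dl (x # mult_slot (length T - 1) (twist (last T) (pc r c)) xs') - dl (x # mult_slot 0 ?p xs')
        \<in> trel r ?sl"
      using trel_Cons[OF Cons.IH[OF adm(2) False xs(3)] xs(2), of "(twist t, bal_ring r t)"]
      by (simp add: linext_diff linext_dl)
    have bal: "dl ((x # xs')[0 := x * twist t ?p]) - dl ((x # xs')[Suc 0 := ?p * xs' ! 0]) \<in> trel r ?sl"
      using trel_balanced[of "x # xs'" r ?sl 0 ?p] xs n pc_bal_ring[OF r3 adm(1)]
      by (simp add: lists_R_Cons)
    show ?thesis
      using trel_diff[OF IH bal] xs n False
      by (simp add: mult_slot_def tw algebra_simps)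
  qed
qed simp

text \<open>Since \<open>p\<^sub>c\<close> lies in every ring \<open>R\<^sup>\<sigma>\<^sup>\<^sub>i\<close> and each twist shifts its index, \<open>p\<^sub>c\<close> can be moved
  through the whole tensor product from right to left.\<close>
lemma tract_pc_eq_tlact_pc:
  assumes adm: "\<forall>t\<in>set T. admissible r t" and T: "T \<noteq> []"
    and A: "A \<in> tcarrier r (slot_pairs r T)"
  shows "tract r (slot_pairs r T) (pc r c) A =
    tlact r (slot_pairs r T) (pc r (c - sum_list (map shift T))) A"
proof -
  obtain u where u: "u \<in> Vfree r (length T)" "A = cls r (slot_pairs r T) u"
    using A by (auto simp: tcarrier_def)
  have last: "fst (last (slot_pairs r T)) = twist (last T)"
    using T by (simp add: slot_pairs_def last_map)
  have "twist (last T) (pc r c) \<in> Rset r"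
    using adm T by (intro ring_endo_Rset[OF _ pc_Rset]) (simp add: admissible_def)
  moreover have "linext (mult_slot (length T - 1) (twist (last T) (pc r c))) u
      - linext (mult_slot 0 (pc r (c - sum_list (map shift T)))) u \<in> trel r (slot_pairs r T)"
    using u(1) by (intro trel_linext_diff trel_move_pc_left[OF adm T]) (auto simp: Vfree_def)
  ultimately show ?thesis
    using u T by (simp add: tract_cls tlact_cls last pc_Rset cls_eq)
qed

text \<open>The tensor product is a torsion-free left \<open>R\<close>-module, as its coordinates live in the
  domain \<open>R\<close>.\<close>
lemma eq_tzero_if_tlact_eq:
  assumes adm: "\<forall>t\<in>set T. admissible r t" and T: "T \<noteq> []"
    and B: "B \<in> tcarrier r (slot_pairs r T)" and ab: "a \<in> Rset r" "b \<in> Rset r" "a \<noteq> b"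
    and eq: "tlact r (slot_pairs r T) a B = tlact r (slot_pairs r T) b B"
  shows "B = tzero r (slot_pairs r T)"
proof -
  obtain v where v: "v \<in> Vfree r (length T)" "B = cls r (slot_pairs r T) v"
    using B by (auto simp: tcarrier_def)
  have "linext (mult_slot 0 a) v \<in> cls r (slot_pairs r T) (linext (mult_slot 0 b) v)"
    using eq v T ab cls_self[OF Vfree_linext_mult_slot[of v r "slot_pairs r T" 0 a]]
    by (simp add: tlact_cls)
  then have "linext (mult_slot 0 a) v - linext (mult_slot 0 b) v \<in> trel r (slot_pairs r T)"
    by (simp add: cls_def)
  then have "coord_fv r T (linext (mult_slot 0 a) v - linext (mult_slot 0 b) v) w = 0" for w
    by (rule coord_fv_trel[OF r3 adm])
  then have "(a - b) * coord_fv r T v w = 0" for w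
    by (simp add: coord_fv_diff coord_fv_mult_first[OF T v(1)] left_diff_distrib)
  then have "v \<in> trel r (slot_pairs r T)"
    using ab(3) by (intro trel_if_coord_fv_eq_0[OF r3 adm T v(1)]) simp
  then show ?thesis
    using v by (simp add: tzero_def cls_eq)
qed

end

definition rho_slots :: "nat \<Rightarrow> int \<Rightarrow> slot_desc list" where
  "rho_slots r k = (if k = 0 then [Slot id None 0]
     else if k > 0 then replicate (nat k) (Slot (rho r) None 1)
     else replicate (nat (- k)) (Slot (rho_inv r) None (-1)))"

definition bs_slots :: "nat \<Rightarrow> nat \<Rightarrow> slot_desc list" where
  "bs_slots r i = [Slot id (Some i) 0, Slot id None 0]"

definition bimod_slots :: "nat \<Rightarrow> int \<Rightarrow> nat list \<Rightarrow> slot_desc list" where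
  "bimod_slots r k is' = rho_slots r k @ concat (map (bs_slots r) is')"

lemma slot_pairs_bimod_slots: "slot_pairs r (bimod_slots r k is') = slots r (bfactors r k is')"
proof -
  have "slot_pairs r (rho_slots r k) = slots r (bpow r k)"
    by (simp add: rho_slots_def bpow_def slot_pairs_def slots_def bal_ring_def)
  moreover have "slot_pairs r (concat (map (bs_slots r) is')) = slots r (map Bs is')"
    by (induction is') (simp_all add: slots_def bs_slots_def bal_ring_def slot_pairs_def)
  ultimately show ?thesis
    by (simp add: bimod_slots_def bfactors_def slot_pairs_def slots_def)
qed

lemma bimod_slots_ne_Nil: "bimod_slots r k is' \<noteq> []"
  by (simp add: bimod_slots_def rho_slots_def)

lemma sum_shift_bimod_slots: "sum_list (map shift (bimod_slots r k is')) = of_int k"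
proof -
  have "sum_list (map shift (concat (map (bs_slots r) is'))) = 0"
    by (induction is') (simp_all add: bs_slots_def)
  then show ?thesis
    by (simp add: bimod_slots_def rho_slots_def sum_list_replicate)
qed

lemma admissible_bimod_slots:
  assumes "3 \<le> r" "set is' \<subseteq> {1..r}"
  shows "\<forall>t\<in>set (bimod_slots r k is'). admissible r t"
  using assms ring_endo_id ring_endo_rho ring_endo_rho_inv rho_pc rho_inv_pc
  by (auto simp: bimod_slots_def rho_slots_def bs_slots_def admissible_def)

lemma tract_pc_0_eq_tlact_bfactors:
  assumes "3 \<le> r" "set is' \<subseteq> {1..r}" "A \<in> tcarrier r (slots r (bfactors r k is'))"
  shows "tract r (slots r (bfactors r k is')) (pc r 0) A =
    tlact r (slots r (bfactors r k is')) (pc r (- of_int k)) A"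
  using tract_pc_eq_tlact_pc[OF assms(1) admissible_bimod_slots[OF assms(1,2), of k]
      bimod_slots_ne_Nil[of r k is'], where c = 0] assms(3)
  by (simp add: slot_pairs_bimod_slots sum_shift_bimod_slots)

lemma eq_tzero_bfactors_if_tlact_eq:
  assumes "3 \<le> r" "set is' \<subseteq> {1..r}" "B \<in> tcarrier r (slots r (bfactors r k is'))"
    and "a \<in> Rset r" "b \<in> Rset r" "a \<noteq> b"
    and "tlact r (slots r (bfactors r k is')) a B = tlact r (slots r (bfactors r k is')) b B"
  shows "B = tzero r (slots r (bfactors r k is'))"
  using eq_tzero_if_tlact_eq[OF assms(1) admissible_bimod_slots[OF assms(1,2)] bimod_slots_ne_Nil]
    assms(3-) by (simp add: slot_pairs_bimod_slots)

theorem mainTheorem3: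
  fixes r :: nat and k l d :: int and is' js :: "nat list" and f :: "fv set \<Rightarrow> fv set"
  assumes "3 \<le> r" and "k \<noteq> l"
    and "set is' \<subseteq> {1..r}" and "set js \<subseteq> {1..r}"
    and "bihom r (slots r (bfactors r k is')) (slots r (bfactors r l js)) d f"
  shows "\<forall>A\<in>tcarrier r (slots r (bfactors r k is')). f A = tzero r (slots r (bfactors r l js))"
proof
  let ?X = "slots r (bfactors r k is')" and ?Y = "slots r (bfactors r l js)"
  fix A assume A: "A \<in> tcarrier r ?X"
  have fA: "f A \<in> tcarrier r ?Y"
    using assms(5) A by (simp add: bihom_def)
  have "tlact r ?Y (pc r (- of_int l)) (f A) = tract r ?Y (pc r 0) (f A)"
    using tract_pc_0_eq_tlact_bfactors[OF assms(1,4) fA] by simp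
  also have "\<dots> = f (tract r ?X (pc r 0) A)"
    using assms(5) A pc_Rset by (simp add: bihom_def)
  also have "\<dots> = f (tlact r ?X (pc r (- of_int k)) A)"
    using tract_pc_0_eq_tlact_bfactors[OF assms(1,3) A] by simp
  also have "\<dots> = tlact r ?Y (pc r (- of_int k)) (f A)"
    using assms(5) A pc_Rset by (simp add: bihom_def)
  finally have "tlact r ?Y (pc r (- of_int l)) (f A) = tlact r ?Y (pc r (- of_int k)) (f A)" .
  moreover have "pc r (- of_int l) \<noteq> pc r (- of_int k)"
    using pc_diff_pc[of r "- of_int l" "- of_int k"] assms(2) Var_ne_0[of 0] by auto
  ultimately show "f A = tzero r ?Y"
    using eq_tzero_bfactors_if_tlact_eq[OF assms(1,4) fA pc_Rset pc_Rset] by simp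
qed

end
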